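(* Let $\ell\geq 2$ and let $\Lambda_1\subsetneq\Lambda_2\subsetneq\cdots$ be a strictly increasing sequence of finite subsets of $\mathbb{Z}^d$ such that each $\Lambda_n$ and each $\Lambda_n\setminus\Lambda_{n-\ell}$ (for $n>\ell$) is connected (as a subgraph of the nearest-neighbor graph of $\mathbb{Z}^d$). For $n$ with $n+1-\ell\geq 1$, set $E_n=G^{\Lambda_n}-G^{\Lambda_{n+1}}$ (an orthogonal projection on $\mathcal{H}_{\Lambda_{n+1}}$). Then, for the PVBS model, $$\big\|G^{\Lambda_{n+1}\setminus\Lambda_{n+1-\ell}}E_n\big\|^2=\frac{C(\Lambda_{n+1-\ell})\,C(\Lambda_{n+1}\setminus\Lambda_n)}{C(\Lambda_n)\,C(\Lambda_{n+1}\setminus\Lambda_{n+1-\ell})}.$$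
   Context: Model (single-species PVBS model) with parameters $\lambda_1,\ldots,\lambda_d\in(0,\infty)$: each site of $\mathbb{Z}^d$ carries $\mathbb{C}^2$ with orthonormal basis $|0\rangle,|1\rangle$, $\mathcal{H}_\Lambda=\bigotimes_{x\in\Lambda}\mathbb{C}^2$; with $\phi^{(\lambda)}=(|01\rangle-\lambda|10\rangle)/\sqrt{1+\lambda^2}$ on the pair $(x,x+e_j)$ (first factor at $x$), $h_{x,x+e_j}=|\phi^{(\lambda_j)}\rangle\langle\phi^{(\lambda_j)}|+|11\rangle\langle11|$ and $H^\Lambda=\sum_{j=1}^d\sum_{x:\,x,x+e_j\in\Lambda}h_{x,x+e_j}$ for finite $\Lambda$. Write $\lambda^x=\prod_j\lambda_j^{x_j}$. For finite $\Lambda\subset\mathbb{Z}^d$, $C(\Lambda)=\sum_{x\in\Lambda}\lambda^{2x}$ (with $C(\emptyset)=0$). $G^\Lambda$ denotes the orthogonal projection onto $\ker H^\Lambda$, regarded as an operator on $\mathcal{H}_{\Lambda'}$ for any finite $\Lambda'\supseteq\Lambda$ by tensoring with the identity on $\mathcal{H}_{\Lambda'\setminus\Lambda}$. (For connected finite $\Lambda$, $\ker H^\Lambda$ is spanned by $\otimes_{x\in\Lambda}|0\rangle$ and $C(\Lambda)^{-1/2}\sum_{x\in\Lambda}\lambda^x\sigma^1_x\otimes_{y\in\Lambda}|0\rangle$, where $\sigma^1_x$ flips $|0\rangle\leftrightarrow|1\rangle$ at $x$.) *)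

theory Defs
  imports "HOL-Analysis.Analysis"
begin

(* A basis vector of
   H_Lambda = (C^2)^{tensor Lambda} is labelled by the set S \<subseteq> Lambda of sites
   in state |1>.  Vectors of H_Lambda: functions  'p set \<Rightarrow> complex  (only values
   on Pow Lambda matter); operators on H_Lambda: matrices  'p set \<Rightarrow> 'p set \<Rightarrow> complex
   indexed by Pow Lambda. *)

type_synonym 'd site = "int ^ 'd"
type_synonym 'd vec = "'d site set \<Rightarrow> complex"
type_synonym 'd mat = "'d site set \<Rightarrow> 'd site set \<Rightarrow> complex"

definition unitv :: "'d::finite \<Rightarrow> 'd site" where
  "unitv j = (\<chi> i. if i = j then 1 else 0)"

definition nn_adj :: "'d::finite site \<Rightarrow> 'd site \<Rightarrow> bool" where
  "nn_adj x y \<longleftrightarrow> (\<exists>j. y = x + unitv j \<or> x = y + unitv j)"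

definition nn_connected :: "'d::finite site set \<Rightarrow> bool" where
  "nn_connected A \<longleftrightarrow>
     (\<forall>x\<in>A. \<forall>y\<in>A. (x, y) \<in> {(u, v). u \<in> A \<and> v \<in> A \<and> nn_adj u v}\<^sup>*)"

definition lam_pow :: "real ^ 'd \<Rightarrow> 'd::finite site \<Rightarrow> real" where
  "lam_pow lam x = (\<Prod>j\<in>UNIV. (lam $ j) powi (x $ j))"

definition Cw :: "real ^ 'd \<Rightarrow> 'd::finite site set \<Rightarrow> real" where
  "Cw lam A = (\<Sum>x\<in>A. lam_pow lam ((\<chi> i. 2 * x $ i)))"

definition mv :: "'d site set \<Rightarrow> 'd mat \<Rightarrow> 'd vec \<Rightarrow> 'd vec" where
  "mv L M v = (\<lambda>S. \<Sum>T\<in>Pow L. M S T * v T)"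

definition mmul :: "'d site set \<Rightarrow> 'd mat \<Rightarrow> 'd mat \<Rightarrow> 'd mat" where
  "mmul L A B = (\<lambda>S U. \<Sum>T\<in>Pow L. A S T * B T U)"

definition inner_H :: "'d site set \<Rightarrow> 'd vec \<Rightarrow> 'd vec \<Rightarrow> complex" where
  "inner_H L v w = (\<Sum>S\<in>Pow L. cnj (v S) * w S)"

definition vnorm :: "'d site set \<Rightarrow> 'd vec \<Rightarrow> real" where
  "vnorm L v = sqrt (\<Sum>S\<in>Pow L. (cmod (v S))\<^sup>2)"

definition opnorm :: "'d site set \<Rightarrow> 'd mat \<Rightarrow> real" where
  "opnorm L M = Sup {vnorm L (mv L M v) | v. vnorm L v \<le> 1}"

(* the two-site vector phi^(lam) on the pair (x,y): coefficient of the basis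
   state given by the set A \<subseteq> {x,y} of sites in state 1;
   phi = (|01> - lam |10>)/sqrt(1+lam^2), first factor at x *)
definition phi_coef :: "real \<Rightarrow> 'd site \<Rightarrow> 'd site \<Rightarrow> 'd site set \<Rightarrow> complex" where
  "phi_coef l x y A =
     (if A = {y} then complex_of_real (1 / sqrt (1 + l\<^sup>2))
      else if A = {x} then complex_of_real (- l / sqrt (1 + l\<^sup>2))
      else 0)"

(* h_{x,y} = |phi><phi| + |11><11| on the pair (x,y), tensored with the identity
   on the remaining sites *)
definition h_pair :: "real \<Rightarrow> 'd site \<Rightarrow> 'd site \<Rightarrow> 'd mat" where
  "h_pair l x y = (\<lambda>S T.
     if S - {x, y} = T - {x, y} then
       phi_coef l x y (S \<inter> {x, y}) * cnj (phi_coef l x y (T \<inter> {x, y}))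
       + (if S \<inter> {x, y} = {x, y} \<and> T \<inter> {x, y} = {x, y} then 1 else 0)
     else 0)"

definition Ham :: "real ^ 'd \<Rightarrow> 'd::finite site set \<Rightarrow> 'd mat" where
  "Ham lam L = (\<lambda>S T. \<Sum>j\<in>UNIV. \<Sum>x\<in>{x \<in> L. x + unitv j \<in> L}.
                    h_pair (lam $ j) x (x + unitv j) S T)"

definition kernel_H :: "'d site set \<Rightarrow> 'd mat \<Rightarrow> 'd vec set" where
  "kernel_H L M = {v. (\<forall>S. S \<notin> Pow L \<longrightarrow> v S = 0) \<and> (\<forall>S\<in>Pow L. mv L M v S = 0)}"

definition orth_proj :: "'d site set \<Rightarrow> 'd vec set \<Rightarrow> 'd mat" where
  "orth_proj L K = (THE P. (\<forall>S T. (S \<notin> Pow L \<or> T \<notin> Pow L) \<longrightarrow> P S T = 0) \<and>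
        (\<forall>v. (\<lambda>S. if S \<in> Pow L then mv L P v S else 0) \<in> K \<and>
             (\<forall>w\<in>K. inner_H L (\<lambda>S. v S - mv L P v S) w = 0)))"

definition Gproj :: "real ^ 'd \<Rightarrow> 'd::finite site set \<Rightarrow> 'd mat" where
  "Gproj lam L = orth_proj L (kernel_H L (Ham lam L))"

(* G^Lambda regarded as an operator on H_{L'} (L \<subseteq> L'), i.e. G^Lambda \<otimes> Id *)
definition Gext :: "real ^ 'd \<Rightarrow> 'd::finite site set \<Rightarrow> 'd site set \<Rightarrow> 'd mat" where
  "Gext lam L L' = (\<lambda>S T.
     if S \<subseteq> L' \<and> T \<subseteq> L' \<and> S - L = T - L then Gproj lam L (S \<inter> L) (T \<inter> L) else 0)"

end

theory Submission
  imports Defs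
begin

text \<open>
  For connected \<open>\<Lambda>\<close> the ground state projection is explicit,
  \<open>G\<^sup>\<Lambda> = |\<Omega>\<rangle>\<langle>\<Omega>| + |\<psi>\<^sub>\<Lambda>\<rangle>\<langle>\<psi>\<^sub>\<Lambda>| / C(\<Lambda>)\<close>, where \<open>\<Omega>\<close> is the vacuum and
  \<open>\<psi>\<^sub>X = \<Sum>\<^sub>x\<^sub>\<in>\<^sub>X \<lambda>\<^sup>x \<sigma>\<^sup>1\<^sub>x \<Omega>\<close>; the kernel is found from frustration freeness, every
  bond term annihilating a kernel vector, and connectivity propagates the bond constraints.
  With \<open>A = \<Lambda>\<^sub>n\<^sub>+\<^sub>1\<close>, \<open>B = \<Lambda>\<^sub>n\<close>, \<open>a = \<Lambda>\<^sub>n\<^sub>+\<^sub>1\<^sub>-\<^sub>\<ell>\<close> and \<open>D = A - a\<close>, a direct computation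
  shows that \<open>G\<^sup>D E\<^sub>n\<close> is the rank-two operator \<open>|h\<rangle>\<langle>g| + |k\<rangle>\<langle>q|\<close> with
  \<open>h = \<psi>\<^sub>a - C(a)/C(D) \<psi>\<^sub>D\<close>, \<open>g = \<psi>\<^sub>B/C(B) - \<psi>\<^sub>A/C(A)\<close> (one-particle vectors) and
  \<open>k = \<psi>\<^sub>a \<otimes> \<psi>\<^sub>D\<close>, \<open>q = \<psi>\<^sub>B \<otimes> \<psi>\<^sub>A\<^sub>-\<^sub>B / (C(D) C(B))\<close> (two-particle vectors).
  Since \<open>h \<perp> k\<close>, \<open>g \<perp> q\<close> and \<open>\<parallel>h\<parallel>\<^sup>2\<parallel>g\<parallel>\<^sup>2 = \<parallel>k\<parallel>\<^sup>2\<parallel>q\<parallel>\<^sup>2\<close>, its squared norm is this common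
  value \<open>C(a) C(A - B) / (C(D) C(B))\<close>.
\<close>

section \<open>Sums over power sets\<close>

lemma sum_Pow_split:
  assumes "finite A" "e \<subseteq> A"
  shows "(\<Sum>T\<in>Pow A. G T) = (\<Sum>U\<in>Pow (A - e). \<Sum>V\<in>Pow e. G (U \<union> V))"
proof -
  have inj: "inj_on (\<lambda>(U, V). U \<union> V) (Pow (A - e) \<times> Pow e)"
  proof (rule inj_onI, clarsimp)
    fix U V U' V'
    assume "U \<subseteq> A - e" "V \<subseteq> e" "U' \<subseteq> A - e" "V' \<subseteq> e" "U \<union> V = U' \<union> V'"
    then have "U = (U \<union> V) - e" "U' = (U' \<union> V') - e" "V = (U \<union> V) \<inter> e" "V' = (U' \<union> V') \<inter> e"
      by auto
    then show "U = U' \<and> V = V'" using \<open>U \<union> V = U' \<union> V'\<close> by metis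
  qed
  have img: "(\<lambda>(U, V). U \<union> V) ` (Pow (A - e) \<times> Pow e) = Pow A"
  proof
    show "(\<lambda>(U, V). U \<union> V) ` (Pow (A - e) \<times> Pow e) \<subseteq> Pow A" using assms by auto
    show "Pow A \<subseteq> (\<lambda>(U, V). U \<union> V) ` (Pow (A - e) \<times> Pow e)"
    proof
      fix T assume "T \<in> Pow A"
      then have "T = (\<lambda>(U, V). U \<union> V) (T - e, T \<inter> e)" "(T - e, T \<inter> e) \<in> Pow (A - e) \<times> Pow e"
        by auto
      then show "T \<in> (\<lambda>(U, V). U \<union> V) ` (Pow (A - e) \<times> Pow e)" by blast
    qed
  qed
  have "(\<Sum>U\<in>Pow (A - e). \<Sum>V\<in>Pow e. G (U \<union> V)) = (\<Sum>(U,V)\<in>Pow (A - e) \<times> Pow e. G (U \<union> V))"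
    by (rule sum.cartesian_product)
  also have "\<dots> = (\<Sum>T\<in>(\<lambda>(U, V). U \<union> V) ` (Pow (A - e) \<times> Pow e). G T)"
    by (subst sum.reindex[OF inj]) (simp add: case_prod_unfold)
  finally show ?thesis using img by simp
qed

lemma sum_Pow_fiber:
  assumes "finite A" "e \<subseteq> A" "S \<subseteq> A"
  shows "(\<Sum>T\<in>Pow A. if T - e = S - e then F T else 0) = (\<Sum>V\<in>Pow e. F ((S - e) \<union> V))"
proof -
  have "(\<Sum>T\<in>Pow A. if T - e = S - e then F T else 0)
      = (\<Sum>U\<in>Pow (A - e). \<Sum>V\<in>Pow e. if (U \<union> V) - e = S - e then F (U \<union> V) else 0)"
    by (rule sum_Pow_split[OF assms(1,2)])
  also have "\<dots> = (\<Sum>U\<in>Pow (A - e). if U = S - e then (\<Sum>V\<in>Pow e. F (U \<union> V)) else 0)"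
  proof (intro sum.cong refl)
    fix U assume U: "U \<in> Pow (A - e)"
    have "\<And>V. V \<in> Pow e \<Longrightarrow> (U \<union> V) - e = U" using U by auto
    then show "(\<Sum>V\<in>Pow e. if (U \<union> V) - e = S - e then F (U \<union> V) else 0)
             = (if U = S - e then (\<Sum>V\<in>Pow e. F (U \<union> V)) else 0)"
      by (auto intro: sum.neutral)
  qed
  also have "\<dots> = (\<Sum>V\<in>Pow e. F ((S - e) \<union> V))"
    using assms by (subst sum.delta) auto
  finally show ?thesis .
qed

lemma sum_Pow_product:
  fixes F1 F2 :: "'a set \<Rightarrow> 'b::comm_semiring_1"
  assumes "finite A" "Q \<subseteq> A"
  shows "(\<Sum>T\<in>Pow A. F1 (T \<inter> (A - Q)) * F2 (T \<inter> Q)) = (\<Sum>U\<in>Pow (A - Q). F1 U) * (\<Sum>V\<in>Pow Q. F2 V)"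
proof -
  have "(\<Sum>T\<in>Pow A. F1 (T \<inter> (A - Q)) * F2 (T \<inter> Q))
      = (\<Sum>U\<in>Pow (A - Q). \<Sum>V\<in>Pow Q. F1 ((U \<union> V) \<inter> (A - Q)) * F2 ((U \<union> V) \<inter> Q))"
    by (rule sum_Pow_split[OF assms])
  also have "\<dots> = (\<Sum>U\<in>Pow (A - Q). \<Sum>V\<in>Pow Q. F1 U * F2 V)"
  proof (intro sum.cong refl)
    fix U V assume "U \<in> Pow (A - Q)" "V \<in> Pow Q"
    then have "(U \<union> V) \<inter> (A - Q) = U" "(U \<union> V) \<inter> Q = V" by auto
    then show "F1 ((U \<union> V) \<inter> (A - Q)) * F2 ((U \<union> V) \<inter> Q) = F1 U * F2 V" by simp
  qed
  also have "\<dots> = (\<Sum>U\<in>Pow (A - Q). F1 U) * (\<Sum>V\<in>Pow Q. F2 V)"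
    by (simp add: sum_product)
  finally show ?thesis .
qed

lemma empty_singleton_or_card_ge_2:
  assumes "finite X"
  obtains "X = {}" | x where "X = {x}" | "2 \<le> card X"
proof -
  have "card X = 0 \<or> card X = 1 \<or> 2 \<le> card X" by linarith
  then show ?thesis using assms that by (auto simp: card_1_singleton_iff)
qed

lemma sum_Pow_card_le_1:
  assumes "finite L" "\<And>S. S \<subseteq> L \<Longrightarrow> 2 \<le> card S \<Longrightarrow> F S = 0"
  shows "(\<Sum>S\<in>Pow L. F S) = F {} + (\<Sum>x\<in>L. F {x})"
proof -
  have "(\<Sum>S\<in>Pow L. F S) = (\<Sum>S\<in>insert {} ((\<lambda>x. {x}) ` L). F S)"
  proof (rule sum.mono_neutral_right)
    show "finite (Pow L)" using assms by simp
    show "insert {} ((\<lambda>x. {x}) ` L) \<subseteq> Pow L" by auto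
    show "\<forall>S\<in>Pow L - insert {} ((\<lambda>x. {x}) ` L). F S = 0"
    proof
      fix S assume S: "S \<in> Pow L - insert {} ((\<lambda>x. {x}) ` L)"
      then have "finite S" using assms finite_subset by auto
      then show "F S = 0" using S assms(2) by (cases rule: empty_singleton_or_card_ge_2) auto
    qed
  qed
  also have "\<dots> = F {} + (\<Sum>x\<in>L. F {x})"
    using assms by (subst sum.insert) (auto simp: sum.reindex inj_on_def)
  finally show ?thesis .
qed

lemma card_Int_Diff_add:
  assumes "finite T" "T \<subseteq> A"
  shows "card T = card (T \<inter> (A - X)) + card (T \<inter> X)"
proof -
  have "T = (T \<inter> (A - X)) \<union> (T \<inter> X)" using assms by blast
  then show ?thesis using assms by (metis Diff_disjoint card_Un_disjoint finite_Int inf_assoc inf_bot_right inf_commute)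
qed

section \<open>Lattice weights and the one-particle vectors\<close>

lemma unitv_neq_0: "unitv j \<noteq> (0::'d::finite site)"
proof
  assume "unitv j = (0::'d site)"
  then have "unitv j $ j = (0::'d site) $ j" by simp
  then show False by (simp add: unitv_def)
qed

lemma add_unitv_neq: "x \<noteq> x + unitv j"
  using unitv_neq_0[of j] by (metis add_cancel_right_right)

lemma Cw_empty [simp]: "Cw lam {} = 0"
  unfolding Cw_def by simp

lemma Cw_union_disjoint:
  "finite A \<Longrightarrow> finite B \<Longrightarrow> A \<inter> B = {} \<Longrightarrow> Cw lam (A \<union> B) = Cw lam A + Cw lam B"
  unfolding Cw_def by (simp add: sum.union_disjoint)

text \<open>\<open>psi lam X\<close> is the coefficient function of \<open>\<psi>\<^sub>X = \<Sum>\<^sub>x\<^sub>\<in>\<^sub>X \<lambda>\<^sup>x \<sigma>\<^sup>1\<^sub>x \<Omega>\<close>.\<close>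

definition psi :: "real ^ 'd \<Rightarrow> 'd::finite site set \<Rightarrow> 'd site set \<Rightarrow> real" where
  "psi lam X S = (if card S = 1 \<and> S \<subseteq> X then lam_pow lam (the_elem S) else 0)"

lemma psi_singleton [simp]: "psi lam X {x} = (if x \<in> X then lam_pow lam x else 0)"
  unfolding psi_def by simp

lemma psi_empty [simp]: "psi lam X {} = 0"
  unfolding psi_def by simp

lemma psi_nonzero_imp_singleton: "psi lam X S \<noteq> 0 \<Longrightarrow> \<exists>x\<in>X. S = {x}"
  unfolding psi_def by (auto split: if_splits simp: card_1_singleton_iff)

lemma psi_card_neq_1: "card S \<noteq> 1 \<Longrightarrow> psi lam X S = 0"
  unfolding psi_def by auto

lemma sum_Pow_psi:
  fixes H :: "'d::finite site set \<Rightarrow> 'a::{real_algebra_1,comm_monoid_add}"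
  assumes "finite A" "X \<subseteq> A"
  shows "(\<Sum>S\<in>Pow A. of_real (psi lam X S) * H S) = (\<Sum>x\<in>X. of_real (lam_pow lam x) * H {x})"
proof -
  have "(\<Sum>S\<in>Pow A. of_real (psi lam X S) * H S) = (\<Sum>S\<in>(\<lambda>x. {x}) ` X. of_real (psi lam X S) * H S)"
  proof (rule sum.mono_neutral_right)
    show "finite (Pow A)" using assms by simp
    show "(\<lambda>x. {x}) ` X \<subseteq> Pow A" using assms by auto
    show "\<forall>S\<in>Pow A - (\<lambda>x. {x}) ` X. of_real (psi lam X S) * H S = 0"
    proof
      fix S assume S: "S \<in> Pow A - (\<lambda>x. {x}) ` X"
      then have "psi lam X S = 0" using psi_nonzero_imp_singleton by blast
      then show "of_real (psi lam X S) * H S = 0" by simp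
    qed
  qed
  also have "\<dots> = (\<Sum>x\<in>X. of_real (lam_pow lam x) * H {x})"
    by (subst sum.reindex) (auto simp: inj_on_def)
  finally show ?thesis .
qed

definition psi_inner :: "real ^ 'd \<Rightarrow> 'd::finite site set \<Rightarrow> 'd vec \<Rightarrow> complex" where
  "psi_inner lam L v = (\<Sum>x\<in>L. complex_of_real (lam_pow lam x) * v {x})"

locale pvbs =
  fixes lam :: "real ^ 'd::finite"
  assumes lam_pos: "\<forall>j. lam $ j > 0"
begin

lemma lam_pow_pos: "lam_pow lam x > 0"
  unfolding lam_pow_def using lam_pos by (intro prod_pos) auto

lemma lam_pow_add_unitv: "lam_pow lam (x + unitv j) = lam $ j * lam_pow lam x"
proof -
  have ne: "\<And>i. lam $ i \<noteq> 0" using lam_pos by (metis less_irrefl)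
  have "lam_pow lam (x + unitv j) = (\<Prod>i\<in>UNIV. lam $ i powi (x $ i + (if i = j then 1 else 0)))"
    unfolding lam_pow_def unitv_def by simp
  also have "\<dots> = (\<Prod>i\<in>UNIV. (if i = j then lam $ i else 1) * lam $ i powi (x $ i))"
    by (intro prod.cong refl) (simp add: power_int_add ne)
  also have "\<dots> = lam $ j * lam_pow lam x"
    unfolding lam_pow_def prod.distrib by (simp add: prod.delta)
  finally show ?thesis .
qed

lemma Cw_eq_sum: "Cw lam L = (\<Sum>x\<in>L. lam_pow lam x * lam_pow lam x)"
proof -
  have "lam_pow lam (\<chi> i. 2 * x $ i) = lam_pow lam x * lam_pow lam x" for x
  proof -
    have "lam $ i powi ((\<chi> i. 2 * x $ i) $ i) = (lam $ i powi (x $ i))\<^sup>2" for i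
      using power_int_power'[of "lam $ i" "x $ i" 2] by (simp add: mult.commute)
    then show ?thesis unfolding lam_pow_def by (simp add: prod.distrib power2_eq_square)
  qed
  then show ?thesis unfolding Cw_def by simp
qed

lemma Cw_pos: "finite L \<Longrightarrow> L \<noteq> {} \<Longrightarrow> Cw lam L > 0"
  unfolding Cw_eq_sum using lam_pow_pos by (intro sum_pos) auto

lemma Cw_nonneg: "Cw lam L \<ge> 0"
  unfolding Cw_eq_sum using lam_pow_pos by (intro sum_nonneg) simp

lemma sum_Pow_psi_psi:
  assumes "finite A" "X \<subseteq> A"
  shows "(\<Sum>S\<in>Pow A. psi lam X S * psi lam Y S) = Cw lam (X \<inter> Y)"
proof -
  have "finite X" using assms finite_subset by blast
  have "(\<Sum>S\<in>Pow A. psi lam X S * psi lam Y S) = (\<Sum>x\<in>X. lam_pow lam x * psi lam Y {x})"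
    using sum_Pow_psi[OF assms, of lam "psi lam Y"] by simp
  also have "\<dots> = (\<Sum>x\<in>X. if x \<in> Y then lam_pow lam x * lam_pow lam x else 0)"
    by (intro sum.cong refl) simp
  also have "\<dots> = Cw lam (X \<inter> Y)"
    unfolding Cw_eq_sum by (rule sum.inter_restrict[OF \<open>finite X\<close>, symmetric])
  finally show ?thesis .
qed

lemma sum_Pow_psi_sq: "finite A \<Longrightarrow> (\<Sum>S\<in>Pow A. (psi lam A S)\<^sup>2) = Cw lam A"
  using sum_Pow_psi_psi[of A A A] by (simp add: power2_eq_square)

end

section \<open>The bond interaction\<close>

lemma cnj_phi_coef [simp]: "cnj (phi_coef l x y A) = phi_coef l x y A"
  unfolding phi_coef_def by simp

lemma sum_Pow_pair:
  assumes "x \<noteq> y"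
  shows "(\<Sum>V\<in>Pow {x, y}. F V) = F {} + F {x} + F {y} + F {x, y}"
proof -
  have "Pow {x, y} = {{}, {x}, {y}, {x, y}}"
    by (auto simp: subset_insert_iff insert_Diff_if split: if_splits)
  moreover have "{x} \<noteq> {y}" "{x} \<noteq> {x, y}" "{y} \<noteq> {x, y}" "{} \<noteq> {x}" "{} \<noteq> {y}" "{} \<noteq> {x,y}"
    using assms by (auto simp: insert_eq_iff)
  ultimately show ?thesis by (simp add: add.assoc)
qed

definition phi_component :: "real \<Rightarrow> 'd site \<Rightarrow> 'd site \<Rightarrow> 'd vec \<Rightarrow> 'd site set \<Rightarrow> complex" where
  "phi_component l x y v U = (\<Sum>V\<in>Pow {x, y}. phi_coef l x y V * v (U \<union> V))"

lemma phi_component_eq: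
  assumes "x \<noteq> y"
  shows "phi_component l x y v U
       = complex_of_real (1 / sqrt (1 + l\<^sup>2)) * (v (insert y U) - complex_of_real l * v (insert x U))"
proof -
  have "phi_coef l x y {} = 0" "phi_coef l x y {x, y} = 0"
    "phi_coef l x y {x} = complex_of_real (- l / sqrt (1 + l\<^sup>2))"
    "phi_coef l x y {y} = complex_of_real (1 / sqrt (1 + l\<^sup>2))"
    using assms unfolding phi_coef_def by (auto simp: insert_eq_iff)
  then show ?thesis
    unfolding phi_component_def using assms by (simp add: sum_Pow_pair algebra_simps)
qed

lemma mv_h_pair:
  assumes "finite L" "x \<in> L" "y \<in> L" "x \<noteq> y" "S \<subseteq> L"
  shows "(\<Sum>T\<in>Pow L. h_pair l x y S T * v T)
       = phi_coef l x y (S \<inter> {x, y}) * phi_component l x y v (S - {x, y}) + (if {x, y} \<subseteq> S then v S else 0)"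
proof -
  let ?e = "{x, y}"
  have e: "?e \<subseteq> L" using assms by auto
  have "(\<Sum>T\<in>Pow L. h_pair l x y S T * v T)
      = (\<Sum>T\<in>Pow L. if T - ?e = S - ?e then
            (phi_coef l x y (S \<inter> ?e) * cnj (phi_coef l x y (T \<inter> ?e))
             + (if S \<inter> ?e = ?e \<and> T \<inter> ?e = ?e then 1 else 0)) * v T else 0)"
    unfolding h_pair_def by (intro sum.cong refl) auto
  also have "\<dots> = (\<Sum>V\<in>Pow ?e. (phi_coef l x y (S \<inter> ?e) * cnj (phi_coef l x y (((S - ?e) \<union> V) \<inter> ?e))
             + (if S \<inter> ?e = ?e \<and> ((S - ?e) \<union> V) \<inter> ?e = ?e then 1 else 0)) * v ((S - ?e) \<union> V))"
    by (rule sum_Pow_fiber[OF assms(1) e assms(5)])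
  also have "\<dots> = (\<Sum>V\<in>Pow ?e. phi_coef l x y (S \<inter> ?e) * (phi_coef l x y V * v ((S - ?e) \<union> V))
             + (if S \<inter> ?e = ?e \<and> V = ?e then v ((S - ?e) \<union> V) else 0))"
  proof (intro sum.cong refl)
    fix V assume "V \<in> Pow ?e"
    then have "((S - ?e) \<union> V) \<inter> ?e = V" by auto
    then show "(phi_coef l x y (S \<inter> ?e) * cnj (phi_coef l x y (((S - ?e) \<union> V) \<inter> ?e))
             + (if S \<inter> ?e = ?e \<and> ((S - ?e) \<union> V) \<inter> ?e = ?e then 1 else 0)) * v ((S - ?e) \<union> V)
         = phi_coef l x y (S \<inter> ?e) * (phi_coef l x y V * v ((S - ?e) \<union> V))
             + (if S \<inter> ?e = ?e \<and> V = ?e then v ((S - ?e) \<union> V) else 0)"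
      by (simp add: algebra_simps)
  qed
  also have "\<dots> = phi_coef l x y (S \<inter> ?e) * phi_component l x y v (S - ?e)
      + (\<Sum>V\<in>Pow ?e. if S \<inter> ?e = ?e \<and> V = ?e then v ((S - ?e) \<union> V) else 0)"
    unfolding phi_component_def sum.distrib sum_distrib_left by simp
  also have "(\<Sum>V\<in>Pow ?e. if S \<inter> ?e = ?e \<and> V = ?e then v ((S - ?e) \<union> V) else 0)
      = (if ?e \<subseteq> S then v S else 0)"
  proof (cases "?e \<subseteq> S")
    case True
    then have "S \<inter> ?e = ?e" "(S - ?e) \<union> ?e = S" by auto
    then show ?thesis using True by (simp add: sum.delta)
  next
    case False
    then have "S \<inter> ?e \<noteq> ?e" by auto
    then show ?thesis using False by (simp; blast)
  qed
  finally show ?thesis .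
qed

definition bond_energy :: "real \<Rightarrow> 'd site \<Rightarrow> 'd site \<Rightarrow> 'd site set \<Rightarrow> 'd vec \<Rightarrow> real" where
  "bond_energy l x y L v = (\<Sum>U\<in>Pow (L - {x, y}).
      (cmod (phi_component l x y v U))\<^sup>2 + (cmod (v (U \<union> {x, y})))\<^sup>2)"

lemma bond_energy_nonneg: "bond_energy l x y L v \<ge> 0"
  unfolding bond_energy_def by (intro sum_nonneg) auto

lemma h_pair_quadratic_form:
  assumes "finite L" "x \<in> L" "y \<in> L" "x \<noteq> y"
  shows "(\<Sum>S\<in>Pow L. cnj (v S) * (\<Sum>T\<in>Pow L. h_pair l x y S T * v T))
       = complex_of_real (bond_energy l x y L v)"
proof -
  let ?e = "{x, y}"
  have e: "?e \<subseteq> L" using assms by auto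
  have "(\<Sum>S\<in>Pow L. cnj (v S) * (\<Sum>T\<in>Pow L. h_pair l x y S T * v T))
      = (\<Sum>S\<in>Pow L. cnj (v S) * (phi_coef l x y (S \<inter> ?e) * phi_component l x y v (S - ?e)
          + (if ?e \<subseteq> S then v S else 0)))"
    using assms by (intro sum.cong refl) (simp add: mv_h_pair)
  also have "\<dots> = (\<Sum>U\<in>Pow (L - ?e). \<Sum>V\<in>Pow ?e. cnj (v (U \<union> V)) * (phi_coef l x y ((U \<union> V) \<inter> ?e)
        * phi_component l x y v ((U \<union> V) - ?e) + (if ?e \<subseteq> U \<union> V then v (U \<union> V) else 0)))"
    by (rule sum_Pow_split[OF assms(1) e])
  also have "\<dots> = (\<Sum>U\<in>Pow (L - ?e). phi_component l x y v U * (\<Sum>V\<in>Pow ?e. phi_coef l x y V * cnj (v (U \<union> V)))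
        + (\<Sum>V\<in>Pow ?e. if V = ?e then cnj (v (U \<union> V)) * v (U \<union> V) else 0))"
  proof (intro sum.cong refl)
    fix U assume U: "U \<in> Pow (L - ?e)"
    have "\<And>V. V \<in> Pow ?e \<Longrightarrow> (U \<union> V) \<inter> ?e = V \<and> (U \<union> V) - ?e = U \<and> (?e \<subseteq> U \<union> V \<longleftrightarrow> V = ?e)"
      using U by auto
    then show "(\<Sum>V\<in>Pow ?e. cnj (v (U \<union> V)) * (phi_coef l x y ((U \<union> V) \<inter> ?e)
        * phi_component l x y v ((U \<union> V) - ?e) + (if ?e \<subseteq> U \<union> V then v (U \<union> V) else 0)))
      = phi_component l x y v U * (\<Sum>V\<in>Pow ?e. phi_coef l x y V * cnj (v (U \<union> V)))
        + (\<Sum>V\<in>Pow ?e. if V = ?e then cnj (v (U \<union> V)) * v (U \<union> V) else 0)"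
      unfolding sum_distrib_left sum.distrib[symmetric]
      by (intro sum.cong refl) (simp add: algebra_simps)
  qed
  also have "\<dots> = (\<Sum>U\<in>Pow (L - ?e). complex_of_real
      ((cmod (phi_component l x y v U))\<^sup>2 + (cmod (v (U \<union> ?e)))\<^sup>2))"
  proof (intro sum.cong refl)
    fix U
    have "(\<Sum>V\<in>Pow ?e. phi_coef l x y V * cnj (v (U \<union> V))) = cnj (phi_component l x y v U)"
      unfolding phi_component_def by simp
    moreover have "(\<Sum>V\<in>Pow ?e. if V = ?e then cnj (v (U \<union> V)) * v (U \<union> V) else 0)
        = cnj (v (U \<union> ?e)) * v (U \<union> ?e)"
      by (simp add: sum.delta)
    moreover have "\<And>z. complex_of_real ((cmod z)\<^sup>2) = cnj z * z"
      by (subst complex_norm_square) (rule mult.commute)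
    ultimately show "phi_component l x y v U * (\<Sum>V\<in>Pow ?e. phi_coef l x y V * cnj (v (U \<union> V)))
        + (\<Sum>V\<in>Pow ?e. if V = ?e then cnj (v (U \<union> V)) * v (U \<union> V) else 0)
        = complex_of_real ((cmod (phi_component l x y v U))\<^sup>2 + (cmod (v (U \<union> ?e)))\<^sup>2)"
      by (simp only: of_real_add mult.commute)
  qed
  finally show ?thesis unfolding bond_energy_def by simp
qed

section \<open>The kernel of the Hamiltonian\<close>

definition bonds :: "'d::finite site set \<Rightarrow> 'd \<Rightarrow> 'd site set" where
  "bonds L j = {x \<in> L. x + unitv j \<in> L}"

lemma mv_Ham:
  "mv L (Ham lam L) v S
   = (\<Sum>j\<in>UNIV. \<Sum>x\<in>bonds L j. \<Sum>T\<in>Pow L. h_pair (lam $ j) x (x + unitv j) S T * v T)"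
proof -
  have "mv L (Ham lam L) v S
      = (\<Sum>T\<in>Pow L. \<Sum>j\<in>UNIV. \<Sum>x\<in>bonds L j. h_pair (lam $ j) x (x + unitv j) S T * v T)"
    unfolding mv_def Ham_def bonds_def by (simp add: sum_distrib_right)
  also have "\<dots> = (\<Sum>j\<in>UNIV. \<Sum>T\<in>Pow L. \<Sum>x\<in>bonds L j. h_pair (lam $ j) x (x + unitv j) S T * v T)"
    by (rule sum.swap)
  also have "\<dots> = (\<Sum>j\<in>UNIV. \<Sum>x\<in>bonds L j. \<Sum>T\<in>Pow L. h_pair (lam $ j) x (x + unitv j) S T * v T)"
    by (intro sum.cong refl sum.swap)
  finally show ?thesis .
qed

lemma Ham_quadratic_form:
  assumes "finite L"
  shows "(\<Sum>S\<in>Pow L. cnj (v S) * mv L (Ham lam L) v S)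
       = complex_of_real (\<Sum>j\<in>UNIV. \<Sum>x\<in>bonds L j. bond_energy (lam $ j) x (x + unitv j) L v)"
proof -
  have "(\<Sum>S\<in>Pow L. cnj (v S) * mv L (Ham lam L) v S)
      = (\<Sum>S\<in>Pow L. \<Sum>j\<in>UNIV. \<Sum>x\<in>bonds L j.
           cnj (v S) * (\<Sum>T\<in>Pow L. h_pair (lam $ j) x (x + unitv j) S T * v T))"
    unfolding mv_Ham by (simp add: sum_distrib_left)
  also have "\<dots> = (\<Sum>j\<in>UNIV. \<Sum>x\<in>bonds L j. \<Sum>S\<in>Pow L.
           cnj (v S) * (\<Sum>T\<in>Pow L. h_pair (lam $ j) x (x + unitv j) S T * v T))"
    by (subst sum.swap) (intro sum.cong refl sum.swap)
  also have "\<dots> = (\<Sum>j\<in>UNIV. \<Sum>x\<in>bonds L j. complex_of_real (bond_energy (lam $ j) x (x + unitv j) L v))"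
    using assms add_unitv_neq unfolding bonds_def
    by (intro sum.cong refl h_pair_quadratic_form) auto
  finally show ?thesis by simp
qed

text \<open>Frustration freeness: \<open>H\<^sup>L v = 0\<close> iff every bond term annihilates \<open>v\<close>, which for the bond
  \<open>(x, x + e\<^sub>j)\<close> means that \<open>v\<close> has no \<open>|11\<rangle>\<close> component there and its \<open>|01\<rangle>\<close> component is
  \<open>\<lambda>\<^sub>j\<close> times its \<open>|10\<rangle>\<close> component.\<close>

definition bond_constraints :: "real ^ 'd \<Rightarrow> 'd::finite site set \<Rightarrow> 'd vec \<Rightarrow> bool" where
  "bond_constraints lam L v \<longleftrightarrow> (\<forall>j x U. x \<in> L \<longrightarrow> x + unitv j \<in> L \<longrightarrow> U \<subseteq> L - {x, x + unitv j} \<longrightarrow>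
      v (U \<union> {x, x + unitv j}) = 0
      \<and> v (insert (x + unitv j) U) = complex_of_real (lam $ j) * v (insert x U))"

definition supported_in :: "'d site set \<Rightarrow> 'd vec \<Rightarrow> bool" where
  "supported_in L v \<longleftrightarrow> (\<forall>S. S \<notin> Pow L \<longrightarrow> v S = 0)"

lemma mv_Ham_eq_0_if_bond_constraints:
  assumes "finite L" "bond_constraints lam L v" "S \<in> Pow L"
  shows "mv L (Ham lam L) v S = 0"
proof -
  have "(\<Sum>T\<in>Pow L. h_pair (lam $ j) x (x + unitv j) S T * v T) = 0" if x: "x \<in> bonds L j" for j x
  proof -
    let ?y = "x + unitv j"
    have xy: "x \<in> L" "?y \<in> L" "x \<noteq> ?y" using x add_unitv_neq unfolding bonds_def by auto
    have U: "S - {x, ?y} \<subseteq> L - {x, ?y}" using assms(3) by auto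
    have c: "v ((S - {x, ?y}) \<union> {x, ?y}) = 0 \<and>
        v (insert ?y (S - {x, ?y})) = complex_of_real (lam $ j) * v (insert x (S - {x, ?y}))"
      using assms(2) xy U unfolding bond_constraints_def by blast
    have "phi_component (lam $ j) x ?y v (S - {x, ?y}) = 0"
      using c by (simp add: phi_component_eq[OF xy(3)])
    moreover have "{x, ?y} \<subseteq> S \<Longrightarrow> v S = 0"
      using c by (metis Un_Diff_cancel2 sup.absorb1)
    ultimately show ?thesis
      using assms(1,3) xy by (simp add: mv_h_pair)
  qed
  then show ?thesis unfolding mv_Ham by simp
qed

lemma bond_constraints_if_bond_energy_eq_0:
  assumes "finite L" "\<And>j x. x \<in> bonds L j \<Longrightarrow> bond_energy (lam $ j) x (x + unitv j) L v = 0"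
  shows "bond_constraints lam L v"
  unfolding bond_constraints_def
proof (intro allI impI)
  fix j x U assume x: "x \<in> L" "x + unitv j \<in> L" and U: "U \<subseteq> L - {x, x + unitv j}"
  let ?y = "x + unitv j"
  define f where "f U = (cmod (phi_component (lam $ j) x ?y v U))\<^sup>2 + (cmod (v (U \<union> {x, ?y})))\<^sup>2"
    for U
  have fin: "finite (Pow (L - {x, ?y}))" using assms(1) by simp
  have "sum f (Pow (L - {x, ?y})) = 0"
    using assms(2)[of x j] x unfolding bond_energy_def bonds_def f_def by simp
  moreover have "\<forall>U\<in>Pow (L - {x, ?y}). f U \<ge> 0" unfolding f_def by simp
  ultimately have "\<forall>U\<in>Pow (L - {x, ?y}). f U = 0" using sum_nonneg_eq_0_iff[OF fin] by blast
  then have "f U = 0" using U by blast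
  then have z: "phi_component (lam $ j) x ?y v U = 0" "v (U \<union> {x, ?y}) = 0"
    unfolding f_def by (simp_all add: add_nonneg_eq_0_iff)
  have "sqrt (1 + (lam $ j)\<^sup>2) > 0" by (simp add: add_pos_nonneg)
  then have "v (insert ?y U) - complex_of_real (lam $ j) * v (insert x U) = 0"
    using z(1) unfolding phi_component_eq[OF add_unitv_neq] by simp
  then show "v (U \<union> {x, ?y}) = 0 \<and> v (insert ?y U) = complex_of_real (lam $ j) * v (insert x U)"
    using z(2) by simp
qed

lemma bond_constraints_if_mv_Ham_eq_0:
  assumes fin: "finite L" and ker: "\<forall>S\<in>Pow L. mv L (Ham lam L) v S = 0"
  shows "bond_constraints lam L v"
proof (rule bond_constraints_if_bond_energy_eq_0[OF fin])
  let ?E = "\<lambda>j x. bond_energy (lam $ j) x (x + unitv j) L v"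
  have fb: "\<And>j. finite (bonds L j)" using fin unfolding bonds_def by simp
  have "complex_of_real (\<Sum>j\<in>UNIV. \<Sum>x\<in>bonds L j. ?E j x) = 0"
    unfolding Ham_quadratic_form[OF fin, symmetric] using ker by simp
  then have "(\<Sum>j\<in>UNIV. \<Sum>x\<in>bonds L j. ?E j x) = 0" by (simp only: of_real_eq_0_iff)
  moreover have "(\<Sum>j\<in>UNIV. \<Sum>x\<in>bonds L j. ?E j x) = 0
      \<longleftrightarrow> (\<forall>j\<in>UNIV. (\<Sum>x\<in>bonds L j. ?E j x) = 0)"
    by (rule sum_nonneg_eq_0_iff) (simp_all add: sum_nonneg bond_energy_nonneg)
  ultimately have all: "\<forall>j\<in>UNIV. (\<Sum>x\<in>bonds L j. ?E j x) = 0" by blast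
  show "?E j x = 0" if x: "x \<in> bonds L j" for j x
  proof -
    have "(\<Sum>x\<in>bonds L j. ?E j x) = 0" using all by blast
    then have "\<forall>x\<in>bonds L j. ?E j x = 0"
      using sum_nonneg_eq_0_iff[OF fb, where f="?E j"] bond_energy_nonneg by blast
    then show ?thesis using x by blast
  qed
qed

lemma kernel_H_Ham_iff:
  assumes "finite L"
  shows "v \<in> kernel_H L (Ham lam L) \<longleftrightarrow> supported_in L v \<and> bond_constraints lam L v"
proof
  assume "v \<in> kernel_H L (Ham lam L)"
  then show "supported_in L v \<and> bond_constraints lam L v"
    using bond_constraints_if_mv_Ham_eq_0[OF assms]
    unfolding kernel_H_def supported_in_def by simp
next
  assume "supported_in L v \<and> bond_constraints lam L v"
  then show "v \<in> kernel_H L (Ham lam L)"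
    using mv_Ham_eq_0_if_bond_constraints[OF assms]
    unfolding kernel_H_def supported_in_def by simp
qed

text \<open>The span of the vacuum and \<open>\<psi>\<^sub>L\<close>.\<close>

definition ground_space :: "real ^ 'd \<Rightarrow> 'd::finite site set \<Rightarrow> 'd vec \<Rightarrow> bool" where
  "ground_space lam L v \<longleftrightarrow> supported_in L v \<and> (\<forall>S. S \<subseteq> L \<longrightarrow> 2 \<le> card S \<longrightarrow> v S = 0)
     \<and> (\<exists>c. \<forall>x\<in>L. v {x} = c * complex_of_real (lam_pow lam x))"

definition nn_edges :: "'d::finite site set \<Rightarrow> ('d site \<times> 'd site) set" where
  "nn_edges L = {(u, w). u \<in> L \<and> w \<in> L \<and> nn_adj u w}"

context pvbs
begin

lemma bond_constraints_nn_adj: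
  assumes bc: "bond_constraints lam L v"
    and uw: "u \<in> L" "w \<in> L" "nn_adj u w" and U: "U \<subseteq> L - {u, w}"
  shows "u \<noteq> w" "v (insert u (insert w U)) = 0" "v (insert w U) = 0 \<longleftrightarrow> v (insert u U) = 0"
proof -
  have bond: "x \<noteq> y \<and> v (insert x (insert y U)) = 0 \<and> (v (insert y U) = 0 \<longleftrightarrow> v (insert x U) = 0)"
    if xy: "x \<in> L" "y \<in> L" "y = x + unitv j" "U \<subseteq> L - {x, y}" for x y j
  proof -
    have "complex_of_real (lam $ j) \<noteq> 0" using lam_pos by (metis less_irrefl of_real_eq_0_iff)
    moreover have "v (U \<union> {x, y}) = 0 \<and> v (insert y U) = complex_of_real (lam $ j) * v (insert x U)"
      using bc xy unfolding bond_constraints_def by blast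
    moreover have "x \<noteq> y" using xy add_unitv_neq by metis
    ultimately show ?thesis by (auto simp: insert_commute)
  qed
  obtain j where "w = u + unitv j \<or> u = w + unitv j" using uw(3) unfolding nn_adj_def by blast
  then have "u \<noteq> w \<and> v (insert u (insert w U)) = 0 \<and> (v (insert w U) = 0 \<longleftrightarrow> v (insert u U) = 0)"
  proof
    assume "w = u + unitv j"
    from bond[OF uw(1,2) this U] show ?thesis .
  next
    assume "u = w + unitv j"
    moreover have "U \<subseteq> L - {w, u}" using U by blast
    ultimately have "w \<noteq> u \<and> v (insert w (insert u U)) = 0 \<and> (v (insert u U) = 0 \<longleftrightarrow> v (insert w U) = 0)"
      by (rule bond[OF uw(2,1)])
    then show ?thesis by (metis insert_commute)
  qed
  then show "u \<noteq> w" "v (insert u (insert w U)) = 0" "v (insert w U) = 0 \<longleftrightarrow> v (insert u U) = 0"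
    by simp_all
qed

text \<open>Along a path from \<open>x\<close> to \<open>z\<close> a particle at \<open>x\<close> can be moved next to one at \<open>z\<close>,
  where the \<open>|11\<rangle>\<close> constraint kills the amplitude.\<close>

lemma bond_constraints_vanish_if_connected:
  assumes bc: "bond_constraints lam L v" and p: "(x, z) \<in> (nn_edges L)\<^sup>*"
  shows "\<forall>S. S \<subseteq> L \<longrightarrow> x \<in> S \<longrightarrow> z \<in> S \<longrightarrow> x \<noteq> z \<longrightarrow> v S = 0"
  using p
proof (induction rule: converse_rtrancl_induct)
  case base
  then show ?case by blast
next
  case (step x x')
  have xx: "x \<in> L" "x' \<in> L" "nn_adj x x'" using step.hyps(1) unfolding nn_edges_def by auto
  show ?case
  proof (intro allI impI)
    fix S assume S: "S \<subseteq> L" "x \<in> S" "z \<in> S" "x \<noteq> z"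
    show "v S = 0"
    proof (cases "x' = z")
      case True
      have "S - {x, x'} \<subseteq> L - {x, x'}" using S by auto
      from bond_constraints_nn_adj(2)[OF bc xx this]
      have "v (insert x (insert x' (S - {x, x'}))) = 0" .
      moreover have "insert x (insert x' (S - {x, x'})) = S" using S True by auto
      ultimately show ?thesis by simp
    next
      case False
      show ?thesis
      proof (cases "x' \<in> S")
        case True
        then show ?thesis using step.IH S False by blast
      next
        case x'S: False
        have "insert x' (S - {x}) \<subseteq> L" "x' \<in> insert x' (S - {x})" "z \<in> insert x' (S - {x})"
          using S xx by auto
        then have "v (insert x' (S - {x})) = 0" using step.IH False by blast
        moreover have "S - {x} \<subseteq> L - {x, x'}" using S x'S by auto
        note bond_constraints_nn_adj(3)[OF bc xx this]
        moreover have "insert x (S - {x}) = S" using S by auto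
        ultimately show ?thesis by simp
      qed
    qed
  qed
qed

lemma bond_constraints_singleton:
  assumes bc: "bond_constraints lam L v" and p: "(x0, z) \<in> (nn_edges L)\<^sup>*"
  shows "v {z} = v {x0} / complex_of_real (lam_pow lam x0) * complex_of_real (lam_pow lam z)"
  using p
proof (induction rule: rtrancl_induct)
  case base
  have "complex_of_real (lam_pow lam x0) \<noteq> 0"
    using lam_pow_pos[of x0] by (metis less_irrefl of_real_eq_0_iff)
  then show ?case by simp
next
  case (step y z)
  have yz: "y \<in> L" "z \<in> L" "nn_adj y z" using step.hyps(2) unfolding nn_edges_def by auto
  obtain j where j: "z = y + unitv j \<or> y = z + unitv j" using yz(3) unfolding nn_adj_def by blast
  have lne: "complex_of_real (lam $ j) \<noteq> 0" using lam_pos by (metis less_irrefl of_real_eq_0_iff)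
  show ?case
  proof (cases "z = y + unitv j")
    case True
    have "v (insert z {}) = complex_of_real (lam $ j) * v (insert y {})"
      using bc yz True unfolding bond_constraints_def by blast
    moreover have "lam_pow lam z = lam $ j * lam_pow lam y" using True lam_pow_add_unitv by simp
    ultimately show ?thesis using step.IH by simp
  next
    case False
    then have F: "y = z + unitv j" using j by blast
    have "v (insert y {}) = complex_of_real (lam $ j) * v (insert z {})"
      using bc yz F unfolding bond_constraints_def by blast
    moreover have "lam_pow lam y = lam $ j * lam_pow lam z" using F lam_pow_add_unitv by simp
    ultimately have "complex_of_real (lam $ j) * v {z}
        = complex_of_real (lam $ j) * (v {x0} / complex_of_real (lam_pow lam x0) * complex_of_real (lam_pow lam z))"
      using step.IH by (simp add: algebra_simps)
    then show ?thesis using lne by (metis mult_left_cancel)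
  qed
qed

lemma ground_space_if_bond_constraints:
  assumes fin: "finite L" and conn: "nn_connected L"
    and sp: "supported_in L v" and bc: "bond_constraints lam L v"
  shows "ground_space lam L v"
proof -
  have path: "\<And>x z. x \<in> L \<Longrightarrow> z \<in> L \<Longrightarrow> (x, z) \<in> (nn_edges L)\<^sup>*"
    using conn unfolding nn_connected_def nn_edges_def by blast
  have "v S = 0" if S: "S \<subseteq> L" "2 \<le> card S" for S
  proof -
    have "finite S" using S fin finite_subset by blast
    then have "\<not> (\<forall>a\<in>S. \<forall>b\<in>S. a = b)" using S(2) card_le_Suc0_iff_eq by fastforce
    then obtain x z where "x \<in> S" "z \<in> S" "x \<noteq> z" by blast
    then show "v S = 0" using bond_constraints_vanish_if_connected[OF bc path] S by blast
  qed
  moreover have "\<exists>c. \<forall>x\<in>L. v {x} = c * complex_of_real (lam_pow lam x)"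
  proof (cases "L = {}")
    case False
    then obtain x0 where x0: "x0 \<in> L" by blast
    show ?thesis using bond_constraints_singleton[OF bc path[OF x0]] by blast
  qed simp
  ultimately show ?thesis unfolding ground_space_def using sp by blast
qed

lemma bond_constraints_if_ground_space:
  assumes fin: "finite L" and gs: "ground_space lam L v"
  shows "bond_constraints lam L v"
  unfolding bond_constraints_def
proof (intro allI impI)
  fix j x U assume x: "x \<in> L" "x + unitv j \<in> L" and U: "U \<subseteq> L - {x, x + unitv j}"
  let ?y = "x + unitv j"
  have multi: "\<And>S. S \<subseteq> L \<Longrightarrow> 2 \<le> card S \<Longrightarrow> v S = 0" using gs unfolding ground_space_def by blast
  obtain c where c: "\<forall>x\<in>L. v {x} = c * complex_of_real (lam_pow lam x)"
    using gs unfolding ground_space_def by blast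
  have fU: "finite U" using U fin finite_subset by blast
  have "card {x, ?y} = 2" using add_unitv_neq[of x j] by simp
  moreover have "card {x, ?y} \<le> card (U \<union> {x, ?y})" using fU by (intro card_mono) auto
  moreover have "U \<union> {x, ?y} \<subseteq> L" using U x by auto
  ultimately have "v (U \<union> {x, ?y}) = 0" using multi by simp
  moreover have "v (insert ?y U) = complex_of_real (lam $ j) * v (insert x U)"
  proof (cases "U = {}")
    case True
    then show ?thesis using c x lam_pow_add_unitv[of x j] by simp
  next
    case False
    then have "card U \<ge> 1" using fU by (simp add: Suc_leI card_gt_0_iff)
    moreover have "x \<notin> U" "?y \<notin> U" using U by auto
    ultimately have "card (insert ?y U) \<ge> 2" "card (insert x U) \<ge> 2" using fU by auto
    moreover have "insert ?y U \<subseteq> L" "insert x U \<subseteq> L" using U x by auto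
    ultimately show ?thesis using multi by simp
  qed
  ultimately show "v (U \<union> {x, ?y}) = 0 \<and> v (insert ?y U) = complex_of_real (lam $ j) * v (insert x U)"
    by blast
qed

lemma kernel_H_Ham_eq_ground_space:
  assumes "finite L" "nn_connected L"
  shows "kernel_H L (Ham lam L) = {v. ground_space lam L v}"
proof (intro set_eqI iffI)
  fix v assume "v \<in> kernel_H L (Ham lam L)"
  then have "supported_in L v" "bond_constraints lam L v"
    using kernel_H_Ham_iff[OF assms(1)] by blast+
  then show "v \<in> {v. ground_space lam L v}"
    using ground_space_if_bond_constraints[OF assms] by blast
next
  fix v assume "v \<in> {v. ground_space lam L v}"
  then have "supported_in L v" "bond_constraints lam L v"
    using bond_constraints_if_ground_space[OF assms(1)] unfolding ground_space_def by auto
  then show "v \<in> kernel_H L (Ham lam L)"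
    using kernel_H_Ham_iff[OF assms(1)] by blast
qed

end

section \<open>The ground state projection\<close>

definition is_orth_proj :: "'d site set \<Rightarrow> 'd vec set \<Rightarrow> 'd mat \<Rightarrow> bool" where
  "is_orth_proj L K P \<longleftrightarrow> (\<forall>S T. (S \<notin> Pow L \<or> T \<notin> Pow L) \<longrightarrow> P S T = 0) \<and>
     (\<forall>v. (\<lambda>S. if S \<in> Pow L then mv L P v S else 0) \<in> K \<and>
          (\<forall>w\<in>K. inner_H L (\<lambda>S. v S - mv L P v S) w = 0))"

lemma is_orth_projI:
  assumes "\<And>S T. S \<notin> Pow L \<or> T \<notin> Pow L \<Longrightarrow> P S T = 0"
    and "\<And>v. (\<lambda>S. if S \<in> Pow L then mv L P v S else 0) \<in> K"
    and "\<And>v w. w \<in> K \<Longrightarrow> inner_H L (\<lambda>S. v S - mv L P v S) w = 0"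
  shows "is_orth_proj L K P"
  using assms unfolding is_orth_proj_def by simp

lemma is_orth_projD:
  assumes "is_orth_proj L K P"
  shows "S \<notin> Pow L \<or> T \<notin> Pow L \<Longrightarrow> P S T = 0"
    and "(\<lambda>S. if S \<in> Pow L then mv L P v S else 0) \<in> K"
    and "w \<in> K \<Longrightarrow> inner_H L (\<lambda>S. v S - mv L P v S) w = 0"
  using assms unfolding is_orth_proj_def by simp_all

lemma mv_indicator:
  assumes "finite L" "T \<in> Pow L"
  shows "mv L P (\<lambda>U. if U = T then 1 else 0) S = P S T"
proof -
  have "mv L P (\<lambda>U. if U = T then 1 else 0) S = (\<Sum>U\<in>Pow L. if U = T then P S U else 0)"
    unfolding mv_def by (intro sum.cong refl) auto
  then show ?thesis using assms by simp
qed

lemma inner_H_self_eq_0D: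
  assumes "finite L" "inner_H L d d = 0" "S \<in> Pow L"
  shows "d S = 0"
proof -
  have "\<And>z. complex_of_real ((cmod z)\<^sup>2) = cnj z * z"
    by (subst complex_norm_square) (rule mult.commute)
  then have "complex_of_real (\<Sum>S\<in>Pow L. (cmod (d S))\<^sup>2) = inner_H L d d"
    unfolding inner_H_def by (simp only: of_real_sum)
  then have "(\<Sum>S\<in>Pow L. (cmod (d S))\<^sup>2) = 0" using assms(2) by (simp only: of_real_eq_0_iff)
  then have "\<forall>S\<in>Pow L. (cmod (d S))\<^sup>2 = 0" using assms(1) by (simp add: sum_nonneg_eq_0_iff)
  then show ?thesis using assms(3) by simp
qed

text \<open>Uniqueness holds for any \<open>K\<close> closed under differences: for two candidates \<open>P\<close>, \<open>P'\<close>
  the vector \<open>d = P v - P' v\<close> lies in \<open>K\<close> and is orthogonal to \<open>K\<close>.\<close>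

lemma is_orth_proj_apply_unique:
  assumes fin: "finite L" and K: "\<And>u w. u \<in> K \<Longrightarrow> w \<in> K \<Longrightarrow> (\<lambda>S. u S - w S) \<in> K"
    and P: "is_orth_proj L K P" and P': "is_orth_proj L K P'" and S: "S \<in> Pow L"
  shows "mv L P v S = mv L P' v S"
proof -
  let ?r = "\<lambda>Q S. if S \<in> Pow L then mv L Q v S else 0"
  define d where "d S = ?r P S - ?r P' S" for S
  have "d \<in> K" unfolding d_def by (rule K[OF is_orth_projD(2)[OF P] is_orth_projD(2)[OF P']])
  then have "inner_H L (\<lambda>S. v S - mv L P v S) d = 0" "inner_H L (\<lambda>S. v S - mv L P' v S) d = 0"
    by (simp_all add: is_orth_projD(3)[OF P] is_orth_projD(3)[OF P'])
  then have "inner_H L (\<lambda>S. v S - mv L P' v S) d - inner_H L (\<lambda>S. v S - mv L P v S) d = 0"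
    by simp
  moreover have "inner_H L (\<lambda>S. v S - mv L P' v S) d - inner_H L (\<lambda>S. v S - mv L P v S) d
      = inner_H L d d"
    unfolding inner_H_def sum_subtractf[symmetric] by (intro sum.cong refl) (simp add: d_def algebra_simps)
  ultimately have "d S = 0" using inner_H_self_eq_0D[OF fin _ S] by simp
  then show ?thesis using S unfolding d_def by simp
qed

lemma orth_proj_eqI:
  assumes fin: "finite L" and K: "\<And>u w. u \<in> K \<Longrightarrow> w \<in> K \<Longrightarrow> (\<lambda>S. u S - w S) \<in> K"
    and P: "is_orth_proj L K P"
  shows "orth_proj L K = P"
  unfolding orth_proj_def is_orth_proj_def[symmetric]
proof (rule the_equality)
  show "is_orth_proj L K P" by (rule P)
next
  fix P' assume P': "is_orth_proj L K P'"
  show "P' = P"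
  proof (intro ext)
    fix S T
    show "P' S T = P S T"
    proof (cases "S \<in> Pow L \<and> T \<in> Pow L")
      case True
      then have S: "S \<in> Pow L" and T: "T \<in> Pow L" by blast+
      let ?\<delta> = "\<lambda>U. if U = T then 1 else 0"
      have "mv L P' ?\<delta> S = mv L P ?\<delta> S"
        by (rule is_orth_proj_apply_unique[OF fin K P' P S])
      then show ?thesis by (simp add: mv_indicator[OF fin T])
    next
      case False
      then have "S \<notin> Pow L \<or> T \<notin> Pow L" by blast
      then have "P' S T = 0" "P S T = 0" by (rule is_orth_projD(1)[OF P'], rule is_orth_projD(1)[OF P])
      then show ?thesis by simp
    qed
  qed
qed

definition ground_proj :: "real ^ 'd \<Rightarrow> 'd::finite site set \<Rightarrow> 'd mat" where
  "ground_proj lam L S T = (if S \<subseteq> L \<and> T \<subseteq> L then complex_of_real ((if S = {} \<and> T = {} then 1 else 0)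
      + psi lam L S * psi lam L T / Cw lam L) else 0)"

lemma mv_ground_proj:
  assumes "finite L" "S \<subseteq> L"
  shows "mv L (ground_proj lam L) v S
       = (if S = {} then v {} else 0) + complex_of_real (psi lam L S / Cw lam L) * psi_inner lam L v"
proof -
  have "mv L (ground_proj lam L) v S = (\<Sum>T\<in>Pow L. (if T = {} then (if S = {} then v T else 0) else 0)
        + complex_of_real (psi lam L S / Cw lam L) * (complex_of_real (psi lam L T) * v T))"
    unfolding mv_def ground_proj_def using assms(2) by (intro sum.cong refl) (auto simp: algebra_simps)
  also have "\<dots> = (if S = {} then v {} else 0) + complex_of_real (psi lam L S / Cw lam L) * psi_inner lam L v"
    using assms(1) unfolding sum.distrib sum_distrib_left[symmetric] psi_inner_def
    by (simp add: sum_Pow_psi)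
  finally show ?thesis .
qed

lemma inner_H_ground_space:
  assumes "finite L" "ground_space lam L w"
  shows "inner_H L f w = cnj (f {}) * w {} + (\<Sum>x\<in>L. cnj (f {x}) * w {x})"
  unfolding inner_H_def
proof (rule sum_Pow_card_le_1[OF assms(1)])
  fix S assume "S \<subseteq> L" "2 \<le> card S"
  then have "w S = 0" using assms(2) unfolding ground_space_def by blast
  then show "cnj (f S) * w S = 0" by simp
qed

lemma ground_space_diff:
  assumes "ground_space lam L u" "ground_space lam L w"
  shows "ground_space lam L (\<lambda>S. u S - w S)"
proof -
  obtain c c' where "\<forall>x\<in>L. u {x} = c * complex_of_real (lam_pow lam x)"
    "\<forall>x\<in>L. w {x} = c' * complex_of_real (lam_pow lam x)"
    using assms unfolding ground_space_def by blast
  then have "\<forall>x\<in>L. u {x} - w {x} = (c - c') * complex_of_real (lam_pow lam x)"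
    by (simp add: left_diff_distrib)
  then show ?thesis using assms unfolding ground_space_def supported_in_def by auto
qed

context pvbs
begin

lemma is_orth_proj_ground_proj:
  assumes fin: "finite L"
  shows "is_orth_proj L {v. ground_space lam L v} (ground_proj lam L)"
proof (rule is_orth_projI)
  fix S T assume "S \<notin> Pow L \<or> T \<notin> Pow L"
  then show "ground_proj lam L S T = 0" unfolding ground_proj_def by auto
next
  fix v
  let ?u = "\<lambda>S. if S \<in> Pow L then mv L (ground_proj lam L) v S else 0"
  have "?u S = 0" if S: "S \<subseteq> L" "2 \<le> card S" for S
  proof -
    have "S \<noteq> {}" "psi lam L S = 0" using S psi_card_neq_1[of S] by auto
    then show "?u S = 0" using S by (simp add: mv_ground_proj[OF fin S(1)])
  qed
  moreover have "\<forall>x\<in>L. ?u {x} = psi_inner lam L v / complex_of_real (Cw lam L) * complex_of_real (lam_pow lam x)"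
    using fin by (simp add: mv_ground_proj)
  ultimately show "?u \<in> {v. ground_space lam L v}"
    unfolding mem_Collect_eq ground_space_def supported_in_def
    by (auto intro!: exI[of _ "psi_inner lam L v / complex_of_real (Cw lam L)"])
next
  fix v w assume "w \<in> {v. ground_space lam L v}"
  then have w: "ground_space lam L w" by simp
  obtain c where c: "\<forall>x\<in>L. w {x} = c * complex_of_real (lam_pow lam x)"
    using w unfolding ground_space_def by blast
  have "inner_H L (\<lambda>S. v S - mv L (ground_proj lam L) v S) w
      = (\<Sum>x\<in>L. cnj (v {x} - complex_of_real (lam_pow lam x / Cw lam L) * psi_inner lam L v)
          * (c * complex_of_real (lam_pow lam x)))"
    unfolding inner_H_ground_space[OF fin w] using fin c by (simp add: mv_ground_proj)
  also have "\<dots> = c * (cnj (psi_inner lam L v) - cnj (psi_inner lam L v)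
      * complex_of_real ((\<Sum>x\<in>L. lam_pow lam x * lam_pow lam x) / Cw lam L))"
    unfolding psi_inner_def
    by (simp add: algebra_simps sum_distrib_left sum_distrib_right sum_subtractf sum_divide_distrib)
  also have "\<dots> = 0"
  proof (cases "L = {}")
    case True then show ?thesis by (simp add: psi_inner_def)
  next
    case False
    then show ?thesis using Cw_pos[OF fin] unfolding Cw_eq_sum[symmetric] by simp
  qed
  finally show "inner_H L (\<lambda>S. v S - mv L (ground_proj lam L) v S) w = 0" .
qed

lemma Gproj_eq_ground_proj:
  assumes "finite L" "nn_connected L"
  shows "Gproj lam L = ground_proj lam L"
  unfolding Gproj_def kernel_H_Ham_eq_ground_space[OF assms]
proof (rule orth_proj_eqI[OF assms(1) _ is_orth_proj_ground_proj[OF assms(1)]])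
  fix u w assume "u \<in> {v. ground_space lam L v}" "w \<in> {v. ground_space lam L v}"
  then show "(\<lambda>S. u S - w S) \<in> {v. ground_space lam L v}" by (simp add: ground_space_diff)
qed

end

section \<open>Embedded projections and products\<close>

text \<open>\<open>Gapply lam L v S\<close> is the value at \<open>S\<close> of \<open>(G\<^sup>L \<otimes> 1) v\<close> for connected \<open>L\<close>.\<close>

definition Gapply :: "real ^ 'd \<Rightarrow> 'd::finite site set \<Rightarrow> 'd vec \<Rightarrow> 'd site set \<Rightarrow> complex" where
  "Gapply lam L v S = (if S \<inter> L = {} then v S else 0) + complex_of_real (psi lam L (S \<inter> L) / Cw lam L)
     * (\<Sum>x\<in>L. complex_of_real (lam_pow lam x) * v (insert x (S - L)))"

lemma (in pvbs) mv_Gext: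
  assumes fin: "finite A" and LA: "L \<subseteq> A" and conn: "nn_connected L" and SA: "S \<subseteq> A"
  shows "mv A (Gext lam L A) v S = Gapply lam L v S"
proof -
  have finL: "finite L" using fin LA finite_subset by blast
  have "mv A (Gext lam L A) v S
      = (\<Sum>T\<in>Pow A. if T - L = S - L then ground_proj lam L (S \<inter> L) (T \<inter> L) * v T else 0)"
    unfolding mv_def Gext_def Gproj_eq_ground_proj[OF finL conn] using SA by (intro sum.cong refl) auto
  also have "\<dots> = (\<Sum>V\<in>Pow L. ground_proj lam L (S \<inter> L) (((S - L) \<union> V) \<inter> L) * v ((S - L) \<union> V))"
    by (rule sum_Pow_fiber[OF fin LA SA])
  also have "\<dots> = mv L (ground_proj lam L) (\<lambda>V. v ((S - L) \<union> V)) (S \<inter> L)"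
    unfolding mv_def
  proof (intro sum.cong refl)
    fix V assume "V \<in> Pow L"
    then have "((S - L) \<union> V) \<inter> L = V" by auto
    then show "ground_proj lam L (S \<inter> L) (((S - L) \<union> V) \<inter> L) * v ((S - L) \<union> V)
        = ground_proj lam L (S \<inter> L) V * v ((S - L) \<union> V)" by simp
  qed
  also have "\<dots> = (if S \<inter> L = {} then v ((S - L) \<union> {}) else 0)
      + complex_of_real (psi lam L (S \<inter> L) / Cw lam L) * psi_inner lam L (\<lambda>V. v ((S - L) \<union> V))"
    by (rule mv_ground_proj[OF finL]) auto
  also have "\<dots> = Gapply lam L v S"
  proof -
    have "(if S \<inter> L = {} then v ((S - L) \<union> {}) else 0) = (if S \<inter> L = {} then v S else 0)"
      by (simp add: Diff_triv)
    moreover have "psi_inner lam L (\<lambda>V. v ((S - L) \<union> V))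
        = (\<Sum>x\<in>L. complex_of_real (lam_pow lam x) * v (insert x (S - L)))"
      unfolding psi_inner_def by simp
    ultimately show ?thesis unfolding Gapply_def by simp
  qed
  finally show ?thesis .
qed

lemma mv_mmul: "finite A \<Longrightarrow> mv A (mmul A X Y) v S = mv A X (mv A Y v) S"
proof -
  have "mv A (mmul A X Y) v S = (\<Sum>T\<in>Pow A. \<Sum>U\<in>Pow A. X S U * (Y U T * v T))"
    unfolding mv_def mmul_def sum_distrib_right by (simp add: mult.assoc)
  also have "\<dots> = (\<Sum>U\<in>Pow A. \<Sum>T\<in>Pow A. X S U * (Y U T * v T))" by (rule sum.swap)
  also have "\<dots> = mv A X (mv A Y v) S"
    unfolding mv_def sum_distrib_left ..
  finally show ?thesis .
qed

lemma Gapply_cong: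
  assumes "\<And>T. T \<subseteq> A \<Longrightarrow> u T = u' T" "S \<subseteq> A" "L \<subseteq> A"
  shows "Gapply lam L u S = Gapply lam L u' S"
proof -
  have "\<And>x. x \<in> L \<Longrightarrow> insert x (S - L) \<subseteq> A" using assms by auto
  then show ?thesis unfolding Gapply_def using assms by (simp cong: sum.cong)
qed

lemma Gapply_disjoint: "S \<inter> L = {} \<Longrightarrow> Gapply lam L v S = v S"
  unfolding Gapply_def by simp

lemma Gapply_card_ge_2:
  assumes "finite S" "2 \<le> card (S \<inter> L)"
  shows "Gapply lam L v S = 0"
proof -
  have "S \<inter> L \<noteq> {}" using assms by auto
  moreover have "psi lam L (S \<inter> L) = 0" using assms by (simp add: psi_card_neq_1)
  ultimately show ?thesis unfolding Gapply_def by simp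
qed

lemma Gapply_singleton:
  assumes "S \<inter> L = {x}"
  shows "Gapply lam L v S = complex_of_real (lam_pow lam x / Cw lam L)
     * (\<Sum>y\<in>L. complex_of_real (lam_pow lam y) * v (insert y (S - L)))"
  using assms unfolding Gapply_def by auto

section \<open>Norm of a rank-two operator\<close>

lemma bessel_inequality_2:
  fixes f g q :: "'x \<Rightarrow> real"
  assumes orth: "(\<Sum>i\<in>I. g i * q i) = 0" and G: "(\<Sum>i\<in>I. (g i)\<^sup>2) > 0" and Q: "(\<Sum>i\<in>I. (q i)\<^sup>2) > 0"
  shows "(\<Sum>i\<in>I. g i * f i)\<^sup>2 / (\<Sum>i\<in>I. (g i)\<^sup>2) + (\<Sum>i\<in>I. q i * f i)\<^sup>2 / (\<Sum>i\<in>I. (q i)\<^sup>2)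
         \<le> (\<Sum>i\<in>I. (f i)\<^sup>2)"
proof -
  define NG where "NG = (\<Sum>i\<in>I. (g i)\<^sup>2)"
  define NQ where "NQ = (\<Sum>i\<in>I. (q i)\<^sup>2)"
  define x where "x = (\<Sum>i\<in>I. g i * f i)"
  define y where "y = (\<Sum>i\<in>I. q i * f i)"
  define a where "a = x / NG"
  define b where "b = y / NQ"
  have pt: "\<And>i. (f i - a * g i - b * q i)\<^sup>2 = (f i)\<^sup>2 - 2 * a * (g i * f i) - 2 * b * (q i * f i)
      + a\<^sup>2 * (g i)\<^sup>2 + b\<^sup>2 * (q i)\<^sup>2 + 2 * a * b * (g i * q i)"
    by (simp add: power2_eq_square algebra_simps)
  have "0 \<le> (\<Sum>i\<in>I. (f i - a * g i - b * q i)\<^sup>2)" by (intro sum_nonneg) simp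
  also have "\<dots> = (\<Sum>i\<in>I. (f i)\<^sup>2) - 2 * a * x - 2 * b * y + a\<^sup>2 * NG + b\<^sup>2 * NQ + 2 * a * b * 0"
    unfolding pt x_def y_def NG_def NQ_def orth[symmetric]
    by (simp add: sum.distrib sum_subtractf sum_distrib_left)
  also have "\<dots> = (\<Sum>i\<in>I. (f i)\<^sup>2) - x\<^sup>2 / NG - y\<^sup>2 / NQ"
    using G Q unfolding a_def b_def NG_def[symmetric] NQ_def[symmetric]
    by (simp add: field_simps power2_eq_square)
  finally show ?thesis unfolding x_def[symmetric] y_def[symmetric] NG_def[symmetric] NQ_def[symmetric]
    by simp
qed

lemma bessel_inequality_2_complex:
  fixes g q :: "'x \<Rightarrow> real" and v :: "'x \<Rightarrow> complex"
  assumes orth: "(\<Sum>i\<in>I. g i * q i) = 0" and G: "(\<Sum>i\<in>I. (g i)\<^sup>2) > 0" and Q: "(\<Sum>i\<in>I. (q i)\<^sup>2) > 0"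
  shows "(cmod (\<Sum>i\<in>I. complex_of_real (g i) * v i))\<^sup>2 / (\<Sum>i\<in>I. (g i)\<^sup>2)
       + (cmod (\<Sum>i\<in>I. complex_of_real (q i) * v i))\<^sup>2 / (\<Sum>i\<in>I. (q i)\<^sup>2)
       \<le> (\<Sum>i\<in>I. (cmod (v i))\<^sup>2)"
proof -
  have "(\<Sum>i\<in>I. g i * Re (v i))\<^sup>2 / (\<Sum>i\<in>I. (g i)\<^sup>2) + (\<Sum>i\<in>I. q i * Re (v i))\<^sup>2 / (\<Sum>i\<in>I. (q i)\<^sup>2)
         \<le> (\<Sum>i\<in>I. (Re (v i))\<^sup>2)"
    and "(\<Sum>i\<in>I. g i * Im (v i))\<^sup>2 / (\<Sum>i\<in>I. (g i)\<^sup>2) + (\<Sum>i\<in>I. q i * Im (v i))\<^sup>2 / (\<Sum>i\<in>I. (q i)\<^sup>2)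
         \<le> (\<Sum>i\<in>I. (Im (v i))\<^sup>2)"
    by (rule bessel_inequality_2[OF orth G Q])+
  then show ?thesis by (simp add: cmod_power2 sum.distrib add_divide_distrib)
qed

lemma sum_cmod_sq_orthogonal_comb:
  fixes h k :: "'x \<Rightarrow> real" and \<alpha> \<beta> :: complex
  assumes hk: "(\<Sum>i\<in>I. h i * k i) = 0"
  shows "(\<Sum>i\<in>I. (cmod (\<alpha> * complex_of_real (h i) + \<beta> * complex_of_real (k i)))\<^sup>2)
       = (cmod \<alpha>)\<^sup>2 * (\<Sum>i\<in>I. (h i)\<^sup>2) + (cmod \<beta>)\<^sup>2 * (\<Sum>i\<in>I. (k i)\<^sup>2)"
proof -
  have "\<And>i. (cmod (\<alpha> * complex_of_real (h i) + \<beta> * complex_of_real (k i)))\<^sup>2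
     = (cmod \<alpha>)\<^sup>2 * (h i)\<^sup>2 + (cmod \<beta>)\<^sup>2 * (k i)\<^sup>2 + 2 * (Re \<alpha> * Re \<beta> + Im \<alpha> * Im \<beta>) * (h i * k i)"
    unfolding cmod_power2 by (simp add: power2_eq_square algebra_simps)
  then have "(\<Sum>i\<in>I. (cmod (\<alpha> * complex_of_real (h i) + \<beta> * complex_of_real (k i)))\<^sup>2)
     = (cmod \<alpha>)\<^sup>2 * (\<Sum>i\<in>I. (h i)\<^sup>2) + (cmod \<beta>)\<^sup>2 * (\<Sum>i\<in>I. (k i)\<^sup>2)
       + 2 * (Re \<alpha> * Re \<beta> + Im \<alpha> * Im \<beta>) * (\<Sum>i\<in>I. h i * k i)"
    by (simp add: sum.distrib sum_distrib_left)
  then show ?thesis using hk by simp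
qed

text \<open>An operator \<open>M = |h\<rangle>\<langle>g| + |k\<rangle>\<langle>q|\<close> with real \<open>g \<perp> q\<close>, \<open>h \<perp> k\<close> and
  \<open>\<parallel>h\<parallel>\<^sup>2\<parallel>g\<parallel>\<^sup>2 = \<parallel>k\<parallel>\<^sup>2\<parallel>q\<parallel>\<^sup>2 = c\<close> satisfies \<open>\<parallel>M v\<parallel>\<^sup>2 = c (|\<langle>g,v\<rangle>|\<^sup>2/\<parallel>g\<parallel>\<^sup>2 + |\<langle>q,v\<rangle>|\<^sup>2/\<parallel>q\<parallel>\<^sup>2)\<close>,
  so Bessel's inequality bounds its norm by \<open>\<surd>c\<close>, attained at \<open>v = q/\<parallel>q\<parallel>\<close>.\<close>

lemma vnorm_rank2_sq:
  fixes M :: "'d mat" and g h q k :: "'d site set \<Rightarrow> real" and L :: "'d site set"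
  assumes act: "\<And>v S. S \<in> Pow L \<Longrightarrow> mv L M v S
        = (\<Sum>T\<in>Pow L. complex_of_real (g T) * v T) * complex_of_real (h S)
          + (\<Sum>T\<in>Pow L. complex_of_real (q T) * v T) * complex_of_real (k S)"
    and hk: "(\<Sum>S\<in>Pow L. h S * k S) = 0"
    and G: "(\<Sum>S\<in>Pow L. (g S)\<^sup>2) > 0" and Q: "(\<Sum>S\<in>Pow L. (q S)\<^sup>2) > 0"
    and c1: "(\<Sum>S\<in>Pow L. (h S)\<^sup>2) * (\<Sum>S\<in>Pow L. (g S)\<^sup>2) = c"
    and c2: "(\<Sum>S\<in>Pow L. (k S)\<^sup>2) * (\<Sum>S\<in>Pow L. (q S)\<^sup>2) = c"
  shows "(vnorm L (mv L M v))\<^sup>2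
      = c * ((cmod (\<Sum>T\<in>Pow L. complex_of_real (g T) * v T))\<^sup>2 / (\<Sum>S\<in>Pow L. (g S)\<^sup>2)
             + (cmod (\<Sum>T\<in>Pow L. complex_of_real (q T) * v T))\<^sup>2 / (\<Sum>S\<in>Pow L. (q S)\<^sup>2))"
proof -
  have NH: "(\<Sum>S\<in>Pow L. (h S)\<^sup>2) = c / (\<Sum>S\<in>Pow L. (g S)\<^sup>2)"
    using c1 G by (simp add: field_simps)
  have NK: "(\<Sum>S\<in>Pow L. (k S)\<^sup>2) = c / (\<Sum>S\<in>Pow L. (q S)\<^sup>2)"
    using c2 Q by (simp add: field_simps)
  have "(vnorm L (mv L M v))\<^sup>2 = (\<Sum>S\<in>Pow L. (cmod ((\<Sum>T\<in>Pow L. complex_of_real (g T) * v T)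
      * complex_of_real (h S) + (\<Sum>T\<in>Pow L. complex_of_real (q T) * v T) * complex_of_real (k S)))\<^sup>2)"
    unfolding vnorm_def using act by (simp add: sum_nonneg)
  also have "\<dots> = (cmod (\<Sum>T\<in>Pow L. complex_of_real (g T) * v T))\<^sup>2 * (c / (\<Sum>S\<in>Pow L. (g S)\<^sup>2))
      + (cmod (\<Sum>T\<in>Pow L. complex_of_real (q T) * v T))\<^sup>2 * (c / (\<Sum>S\<in>Pow L. (q S)\<^sup>2))"
    unfolding sum_cmod_sq_orthogonal_comb[OF hk] NH NK ..
  finally show ?thesis by (simp add: algebra_simps)
qed

lemma opnorm_rank2:
  fixes M :: "'d mat" and g h q k :: "'d site set \<Rightarrow> real" and L :: "'d site set"
  assumes act: "\<And>v S. S \<in> Pow L \<Longrightarrow> mv L M v S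
        = (\<Sum>T\<in>Pow L. complex_of_real (g T) * v T) * complex_of_real (h S)
          + (\<Sum>T\<in>Pow L. complex_of_real (q T) * v T) * complex_of_real (k S)"
    and hk: "(\<Sum>S\<in>Pow L. h S * k S) = 0" and gq: "(\<Sum>S\<in>Pow L. g S * q S) = 0"
    and G: "(\<Sum>S\<in>Pow L. (g S)\<^sup>2) > 0" and Q: "(\<Sum>S\<in>Pow L. (q S)\<^sup>2) > 0"
    and c1: "(\<Sum>S\<in>Pow L. (h S)\<^sup>2) * (\<Sum>S\<in>Pow L. (g S)\<^sup>2) = c"
    and c2: "(\<Sum>S\<in>Pow L. (k S)\<^sup>2) * (\<Sum>S\<in>Pow L. (q S)\<^sup>2) = c"
  shows "opnorm L M = sqrt c"
proof -
  have norm_sq: "(vnorm L (mv L M v))\<^sup>2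
      = c * ((cmod (\<Sum>T\<in>Pow L. complex_of_real (g T) * v T))\<^sup>2 / (\<Sum>S\<in>Pow L. (g S)\<^sup>2)
             + (cmod (\<Sum>T\<in>Pow L. complex_of_real (q T) * v T))\<^sup>2 / (\<Sum>S\<in>Pow L. (q S)\<^sup>2))" for v
    by (rule vnorm_rank2_sq[OF _ hk G Q c1 c2]) (simp add: act)
  define NQ where "NQ = (\<Sum>S\<in>Pow L. (q S)\<^sup>2)"
  have NQ: "NQ > 0" using Q unfolding NQ_def .
  have c0: "c \<ge> 0" using c1[symmetric] by (simp add: sum_nonneg)
  have ub: "vnorm L (mv L M v) \<le> sqrt c" if "vnorm L v \<le> 1" for v
  proof -
    have "(vnorm L (mv L M v))\<^sup>2 \<le> c * (\<Sum>T\<in>Pow L. (cmod (v T))\<^sup>2)"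
      by (subst norm_sq) (rule mult_left_mono[OF bessel_inequality_2_complex[OF gq G Q] c0])
    also have "\<dots> \<le> c"
      using that c0 unfolding vnorm_def by (simp add: sum_nonneg mult_left_le)
    finally show ?thesis by (simp add: real_le_rsqrt)
  qed
  have "\<exists>v. vnorm L v \<le> 1 \<and> vnorm L (mv L M v) = sqrt c"
  proof (intro exI conjI)
    let ?v = "\<lambda>T. complex_of_real (q T / sqrt NQ)"
    have "vnorm L ?v = sqrt ((\<Sum>T\<in>Pow L. (q T)\<^sup>2) / NQ)"
      unfolding vnorm_def norm_of_real using NQ by (simp add: power_divide sum_divide_distrib)
    then show "vnorm L ?v \<le> 1" using NQ unfolding NQ_def by simp
    have "(\<Sum>T\<in>Pow L. complex_of_real (g T) * ?v T) = complex_of_real ((\<Sum>T\<in>Pow L. g T * q T) / sqrt NQ)"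
      by (simp add: sum_divide_distrib)
    then have "(\<Sum>T\<in>Pow L. complex_of_real (g T) * ?v T) = 0" using gq by simp
    moreover have "(\<Sum>T\<in>Pow L. complex_of_real (q T) * ?v T) = complex_of_real (NQ / sqrt NQ)"
      unfolding NQ_def by (simp add: sum_divide_distrib power2_eq_square)
    moreover have "NQ / sqrt NQ = sqrt NQ" using NQ by (simp add: real_div_sqrt)
    ultimately have "(vnorm L (mv L M ?v))\<^sup>2 = c"
      unfolding norm_sq NQ_def[symmetric] using NQ by simp
    moreover have "vnorm L (mv L M ?v) \<ge> 0" unfolding vnorm_def by (simp add: sum_nonneg)
    ultimately show "vnorm L (mv L M ?v) = sqrt c" using real_sqrt_unique by metis
  qed
  then have "sqrt c \<in> {vnorm L (mv L M v) |v. vnorm L v \<le> 1}" by (metis (mono_tags) mem_Collect_eq)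
  moreover have "x \<le> sqrt c" if "x \<in> {vnorm L (mv L M v) |v. vnorm L v \<le> 1}" for x
    using that ub by auto
  ultimately show ?thesis unfolding opnorm_def by (rule cSup_eq_maximum)
qed

section \<open>The operator \<open>G\<^sup>D E\<close> for nested regions\<close>

locale nested_regions = pvbs lam for lam :: "real ^ 'd::finite" +
  fixes A B a :: "'d::finite site set"
  assumes finite_A: "finite A" and a_B: "a \<subseteq> B" and B_A: "B \<subset> A" and B_nonempty: "B \<noteq> {}"
    and conn_A: "nn_connected A" and conn_B: "nn_connected B" and conn_D: "nn_connected (A - a)"
begin

abbreviation "D \<equiv> A - a"
abbreviation "R \<equiv> A - B"

lemma B_subset_A: "B \<subseteq> A" using B_A by blast
lemma finite_B: "finite B" using finite_A B_subset_A finite_subset by blast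
lemma finite_a: "finite a" using finite_B a_B finite_subset by blast
lemma finite_D: "finite D" using finite_A by simp
lemma finite_R: "finite R" using finite_A by simp
lemma R_subset_D: "R \<subseteq> D" using a_B by blast
lemma A_Diff_R: "A - R = B" using B_A by blast
lemma A_Diff_D: "A - D = a" using a_B B_A by blast

lemma Cw_B_pos: "Cw lam B > 0" using Cw_pos[OF finite_B B_nonempty] .
lemma Cw_A_pos: "Cw lam A > 0" using Cw_pos[OF finite_A] B_nonempty B_A by blast
lemma Cw_R_pos: "Cw lam R > 0" using Cw_pos[OF finite_R] B_A by blast
lemma Cw_D_pos: "Cw lam D > 0" using Cw_pos[OF finite_D] B_A R_subset_D by blast

lemma Cw_A_eq_B_R: "Cw lam A = Cw lam B + Cw lam R"
  using Cw_union_disjoint[OF finite_B finite_R, of lam] B_subset_A by (simp add: Un_absorb1)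

lemma Cw_A_eq_a_D: "Cw lam A = Cw lam a + Cw lam D"
  using Cw_union_disjoint[OF finite_a finite_D, of lam] a_B B_subset_A by (simp add: Un_absorb1)

lemma Cw_B_eq_a_DB: "Cw lam B = Cw lam a + Cw lam (D \<inter> B)"
proof -
  have "B = a \<union> (D \<inter> B)" using a_B B_A by blast
  then show ?thesis using Cw_union_disjoint[OF finite_a, of "D \<inter> B" lam] finite_B by auto
qed

definition E_apply :: "'d vec \<Rightarrow> 'd vec" where
  "E_apply v T = Gapply lam B v T - Gapply lam A v T"

definition alpha :: "'d vec \<Rightarrow> complex" where
  "alpha v = psi_inner lam B v / complex_of_real (Cw lam B) - psi_inner lam A v / complex_of_real (Cw lam A)"

definition beta :: "'d vec \<Rightarrow> complex" where
  "beta v = (\<Sum>y\<in>R. \<Sum>u\<in>B. complex_of_real (lam_pow lam y * lam_pow lam u) * v (insert u {y}))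
            / complex_of_real (Cw lam D * Cw lam B)"

lemma E_apply_empty: "E_apply v {} = 0"
  unfolding E_apply_def by (simp add: Gapply_disjoint)

lemma E_apply_card_ge_2:
  assumes "T \<subseteq> A" "2 \<le> card (T \<inter> B)"
  shows "E_apply v T = 0"
proof -
  have fT: "finite T" using assms finite_A finite_subset by blast
  have "card (T \<inter> B) \<le> card (T \<inter> A)" using fT B_subset_A by (intro card_mono) auto
  then show ?thesis unfolding E_apply_def using Gapply_card_ge_2[OF fT] assms by simp
qed

lemma E_apply_singleton_B:
  assumes "y \<in> B"
  shows "E_apply v {y} = complex_of_real (lam_pow lam y) * alpha v"
proof -
  have "Gapply lam B v {y} = complex_of_real (lam_pow lam y / Cw lam B) * psi_inner lam B v"
    using Gapply_singleton[of "{y}" B y] assms unfolding psi_inner_def by simp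
  moreover have "Gapply lam A v {y} = complex_of_real (lam_pow lam y / Cw lam A) * psi_inner lam A v"
    using Gapply_singleton[of "{y}" A y] assms B_subset_A unfolding psi_inner_def by auto
  ultimately show ?thesis unfolding E_apply_def alpha_def by (simp add: field_simps)
qed

lemma E_apply_singleton_R:
  assumes "y \<in> R"
  shows "E_apply v {y} = v {y} - complex_of_real (lam_pow lam y / Cw lam A) * psi_inner lam A v"
proof -
  have "Gapply lam B v {y} = v {y}" using assms by (intro Gapply_disjoint) auto
  moreover have "Gapply lam A v {y} = complex_of_real (lam_pow lam y / Cw lam A) * psi_inner lam A v"
    using Gapply_singleton[of "{y}" A y] assms unfolding psi_inner_def by simp
  ultimately show ?thesis unfolding E_apply_def by simp
qed

lemma E_apply_pair:
  assumes "y \<in> R" "z \<in> B"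
  shows "E_apply v {y, z} = complex_of_real (lam_pow lam z / Cw lam B)
    * (\<Sum>u\<in>B. complex_of_real (lam_pow lam u) * v (insert u {y}))"
proof -
  have "{y, z} \<inter> B = {z}" "{y, z} - B = {y}" using assms by auto
  then have "Gapply lam B v {y, z} = complex_of_real (lam_pow lam z / Cw lam B)
      * (\<Sum>u\<in>B. complex_of_real (lam_pow lam u) * v (insert u {y}))"
    using Gapply_singleton[of "{y, z}" B z] by simp
  moreover have "{y, z} \<inter> A = {y, z}" "y \<noteq> z" using assms B_A by auto
  then have "Gapply lam A v {y, z} = 0" by (intro Gapply_card_ge_2) simp_all
  ultimately show ?thesis unfolding E_apply_def by simp
qed

definition hvec :: "'d site set \<Rightarrow> real" where
  "hvec S = psi lam a S - psi lam D S * Cw lam a / Cw lam D"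

definition kvec :: "'d site set \<Rightarrow> real" where
  "kvec S = psi lam a (S \<inter> a) * psi lam D (S \<inter> D)"

lemma GD_E_apply_subset_a:
  assumes S: "S \<subseteq> a"
  shows "Gapply lam D (E_apply v) S = alpha v * complex_of_real (hvec S) + beta v * complex_of_real (kvec S)"
proof -
  have fS: "finite S" using S finite_a finite_subset by blast
  have lhs: "Gapply lam D (E_apply v) S = E_apply v S" using S by (intro Gapply_disjoint) auto
  have "S \<inter> D = {}" using S by blast
  then have k0: "kvec S = 0" unfolding kvec_def by simp
  from fS show ?thesis
  proof (cases rule: empty_singleton_or_card_ge_2)
    case 1 then show ?thesis using lhs k0 E_apply_empty unfolding hvec_def by simp
  next
    case (2 z)
    then have "z \<in> a" "z \<in> B" "z \<notin> D" using S a_B by auto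
    then show ?thesis using lhs k0 E_apply_singleton_B 2 unfolding hvec_def by simp
  next
    case 3
    have "S \<subseteq> A" "S \<inter> B = S" using S a_B B_A by auto
    then have "E_apply v S = 0" using E_apply_card_ge_2 3 by simp
    moreover have "psi lam a S = 0" "psi lam D S = 0" using 3 by (simp_all add: psi_card_neq_1)
    ultimately show ?thesis using lhs k0 unfolding hvec_def by simp
  qed
qed

lemma sum_D_E_apply_singleton:
  "(\<Sum>y\<in>D. complex_of_real (lam_pow lam y) * E_apply v {y}) = - complex_of_real (Cw lam a) * alpha v"
proof -
  let ?sR = "\<Sum>y\<in>R. complex_of_real (lam_pow lam y) * v {y}"
  have sA: "psi_inner lam A v = psi_inner lam B v + ?sR"
    unfolding psi_inner_def using sum.union_disjoint[OF finite_B finite_R] B_subset_A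
    by (simp add: Un_absorb1)
  have D_eq: "D = (D \<inter> B) \<union> R" using a_B B_A by blast
  have "(\<Sum>y\<in>D. complex_of_real (lam_pow lam y) * E_apply v {y})
      = (\<Sum>y\<in>D \<inter> B. complex_of_real (lam_pow lam y) * E_apply v {y})
        + (\<Sum>y\<in>R. complex_of_real (lam_pow lam y) * E_apply v {y})"
    using finite_A finite_B by (subst D_eq, intro sum.union_disjoint) auto
  also have "\<dots> = (\<Sum>y\<in>D \<inter> B. complex_of_real (lam_pow lam y * lam_pow lam y) * alpha v)
      + (\<Sum>y\<in>R. complex_of_real (lam_pow lam y) * v {y}
           - complex_of_real (lam_pow lam y * lam_pow lam y / Cw lam A) * psi_inner lam A v)"
    by (intro arg_cong2[where f="(+)"] sum.cong refl)
      (simp_all add: E_apply_singleton_B E_apply_singleton_R algebra_simps)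
  also have "\<dots> = complex_of_real (Cw lam (D \<inter> B)) * alpha v + ?sR
      - complex_of_real (Cw lam R / Cw lam A) * psi_inner lam A v"
    unfolding Cw_eq_sum by (simp add: sum_distrib_right sum_subtractf sum_divide_distrib)
  also have "\<dots> = - complex_of_real (Cw lam a) * alpha v"
  proof -
    have "complex_of_real (Cw lam B) \<noteq> 0" "complex_of_real (Cw lam A) \<noteq> 0"
      using Cw_B_pos Cw_A_pos by auto
    moreover have e1: "Cw lam (D \<inter> B) = Cw lam B - Cw lam a" and e2: "Cw lam R = Cw lam A - Cw lam B"
      using Cw_B_eq_a_DB Cw_A_eq_B_R by simp_all
    ultimately show ?thesis unfolding alpha_def sA e1 e2 by (simp add: field_simps)
  qed
  finally show ?thesis .
qed

lemma GD_E_apply_singleton_D: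
  assumes x: "x \<in> D"
  shows "Gapply lam D (E_apply v) {x}
       = alpha v * complex_of_real (hvec {x}) + beta v * complex_of_real (kvec {x})"
proof -
  have "Gapply lam D (E_apply v) {x} = complex_of_real (lam_pow lam x / Cw lam D)
      * (\<Sum>y\<in>D. complex_of_real (lam_pow lam y) * E_apply v {y})"
    using Gapply_singleton[of "{x}" D x] x by simp
  moreover have "kvec {x} = 0" unfolding kvec_def using x by simp
  moreover have "hvec {x} = - lam_pow lam x * Cw lam a / Cw lam D" unfolding hvec_def using x by simp
  ultimately show ?thesis unfolding sum_D_E_apply_singleton by (simp add: field_simps)
qed

lemma GD_E_apply_pair:
  assumes z: "z \<in> a" and x: "x \<in> D"
  shows "Gapply lam D (E_apply v) {z, x}
       = alpha v * complex_of_real (hvec {z, x}) + beta v * complex_of_real (kvec {z, x})"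
proof -
  have zB: "z \<in> B" and zx: "z \<noteq> x" using z x a_B by auto
  have "{z, x} \<inter> D = {x}" "{z, x} - D = {z}" using z x by auto
  then have lhs: "Gapply lam D (E_apply v) {z, x} = complex_of_real (lam_pow lam x / Cw lam D)
      * (\<Sum>y\<in>D. complex_of_real (lam_pow lam y) * E_apply v (insert y {z}))"
    using Gapply_singleton[of "{z, x}" D x] by simp
  have "{z, x} \<inter> a = {z}" using z x by auto
  then have "kvec {z, x} = lam_pow lam z * lam_pow lam x"
    unfolding kvec_def using \<open>{z, x} \<inter> D = {x}\<close> z x by simp
  moreover have "hvec {z, x} = 0" unfolding hvec_def using zx by (simp add: psi_card_neq_1)
  moreover have "(\<Sum>y\<in>D. complex_of_real (lam_pow lam y) * E_apply v (insert y {z}))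
      = (\<Sum>y\<in>R. complex_of_real (lam_pow lam y) * E_apply v (insert y {z}))"
  proof (rule sum.mono_neutral_right[OF finite_D R_subset_D], rule ballI)
    fix y assume y: "y \<in> D - R"
    then have "insert y {z} \<inter> B = {y, z}" "y \<noteq> z" "insert y {z} \<subseteq> A" using z zB B_A by auto
    then have "E_apply v (insert y {z}) = 0" using E_apply_card_ge_2 by simp
    then show "complex_of_real (lam_pow lam y) * E_apply v (insert y {z}) = 0" by simp
  qed
  moreover have "(\<Sum>y\<in>R. complex_of_real (lam_pow lam y) * E_apply v (insert y {z}))
      = complex_of_real (lam_pow lam z / Cw lam B) *
        (\<Sum>y\<in>R. \<Sum>u\<in>B. complex_of_real (lam_pow lam y * lam_pow lam u) * v (insert u {y}))"
    using E_apply_pair[OF _ zB] by (simp add: sum_distrib_left algebra_simps)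
  ultimately show ?thesis using lhs unfolding beta_def using Cw_B_pos Cw_D_pos by (simp add: field_simps)
qed

lemma GD_E_apply_card_a_ge_2:
  assumes S: "S \<subseteq> A" and x: "S \<inter> D = {x}" and card: "2 \<le> card (S \<inter> a)"
  shows "Gapply lam D (E_apply v) S = alpha v * complex_of_real (hvec S) + beta v * complex_of_real (kvec S)"
proof -
  have fS: "finite S" using S finite_A finite_subset by blast
  have "E_apply v (insert y (S - D)) = 0" if y: "y \<in> D" for y
  proof -
    have "S \<inter> a \<subseteq> insert y (S - D) \<inter> B" using a_B by auto
    then have "card (S \<inter> a) \<le> card (insert y (S - D) \<inter> B)" using fS by (intro card_mono) auto
    moreover have "insert y (S - D) \<subseteq> A" using y S by auto
    ultimately show ?thesis using E_apply_card_ge_2 card by simp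
  qed
  then have "Gapply lam D (E_apply v) S = 0" using Gapply_singleton[OF x] by simp
  moreover have "card S = card (S \<inter> (A - D)) + card (S \<inter> D)" by (rule card_Int_Diff_add[OF fS S])
  then have "card S \<noteq> 1" "card (S \<inter> a) \<noteq> 1" using card unfolding A_Diff_D by simp_all
  then have "hvec S = 0" "kvec S = 0" unfolding hvec_def kvec_def by (simp_all add: psi_card_neq_1)
  ultimately show ?thesis by simp
qed

lemma GD_E_apply_card_D_ge_2:
  assumes S: "S \<subseteq> A" and card: "2 \<le> card (S \<inter> D)"
  shows "Gapply lam D (E_apply v) S = alpha v * complex_of_real (hvec S) + beta v * complex_of_real (kvec S)"
proof -
  have fS: "finite S" using S finite_A finite_subset by blast
  have "card S = card (S \<inter> (A - D)) + card (S \<inter> D)" by (rule card_Int_Diff_add[OF fS S])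
  then have "card S \<noteq> 1" "card (S \<inter> D) \<noteq> 1" using card by simp_all
  then have "hvec S = 0" "kvec S = 0" unfolding hvec_def kvec_def by (simp_all add: psi_card_neq_1)
  then show ?thesis using Gapply_card_ge_2[OF fS card] by simp
qed

lemma GD_E_apply:
  assumes S: "S \<subseteq> A"
  shows "Gapply lam D (E_apply v) S = alpha v * complex_of_real (hvec S) + beta v * complex_of_real (kvec S)"
proof -
  have fin: "finite (S \<inter> D)" "finite (S \<inter> a)" using S finite_A finite_subset by blast+
  have S_eq: "S = (S \<inter> a) \<union> (S \<inter> D)" using S by blast
  from fin(1) show ?thesis
  proof (cases rule: empty_singleton_or_card_ge_2)
    case 1
    then show ?thesis using S_eq GD_E_apply_subset_a by (metis Int_lower2 sup_bot.right_neutral)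
  next
    case (2 x)
    then have x: "x \<in> D" by blast
    from fin(2) show ?thesis
    proof (cases rule: empty_singleton_or_card_ge_2)
      case 1
      then show ?thesis using S_eq 2 GD_E_apply_singleton_D[OF x] by simp
    next
      case (2 z)
      then have "z \<in> a" "S = {z, x}" using S_eq \<open>S \<inter> D = {x}\<close> by auto
      then show ?thesis using GD_E_apply_pair[OF _ x] by simp
    next
      case 3
      then show ?thesis using GD_E_apply_card_a_ge_2[OF S \<open>S \<inter> D = {x}\<close>] by simp
    qed
  next
    case 3
    then show ?thesis using GD_E_apply_card_D_ge_2[OF S] by simp
  qed
qed

definition gvec :: "'d site set \<Rightarrow> real" where
  "gvec T = psi lam B T / Cw lam B - psi lam A T / Cw lam A"

definition qvec :: "'d site set \<Rightarrow> real" where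
  "qvec T = psi lam B (T \<inter> B) * psi lam R (T \<inter> R) / (Cw lam D * Cw lam B)"

lemma alpha_eq_sum: "alpha v = (\<Sum>T\<in>Pow A. complex_of_real (gvec T) * v T)"
proof -
  have "psi_inner lam B v = (\<Sum>T\<in>Pow A. complex_of_real (psi lam B T) * v T)"
    "psi_inner lam A v = (\<Sum>T\<in>Pow A. complex_of_real (psi lam A T) * v T)"
    unfolding psi_inner_def using finite_A B_subset_A by (simp_all add: sum_Pow_psi)
  then show ?thesis unfolding alpha_def gvec_def
    by (simp add: sum_divide_distrib sum_subtractf algebra_simps)
qed

lemma beta_eq_sum: "beta v = (\<Sum>T\<in>Pow A. complex_of_real (qvec T) * v T)"
proof -
  have "(\<Sum>T\<in>Pow A. complex_of_real (psi lam B (T \<inter> B) * psi lam R (T \<inter> R)) * v T)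
      = (\<Sum>U\<in>Pow B. \<Sum>V\<in>Pow R. complex_of_real (psi lam B ((U \<union> V) \<inter> B) * psi lam R ((U \<union> V) \<inter> R))
          * v (U \<union> V))"
    using sum_Pow_split[OF finite_A, of R] unfolding A_Diff_R by simp
  also have "\<dots> = (\<Sum>U\<in>Pow B. complex_of_real (psi lam B U)
      * (\<Sum>V\<in>Pow R. complex_of_real (psi lam R V) * v (U \<union> V)))"
    unfolding sum_distrib_left
  proof (intro sum.cong refl)
    fix U V assume "U \<in> Pow B" "V \<in> Pow R"
    then have "(U \<union> V) \<inter> B = U" "(U \<union> V) \<inter> R = V" by auto
    then show "complex_of_real (psi lam B ((U \<union> V) \<inter> B) * psi lam R ((U \<union> V) \<inter> R)) * v (U \<union> V)
        = complex_of_real (psi lam B U) * (complex_of_real (psi lam R V) * v (U \<union> V))" by simp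
  qed
  also have "\<dots> = (\<Sum>u\<in>B. complex_of_real (lam_pow lam u)
      * (\<Sum>y\<in>R. complex_of_real (lam_pow lam y) * v ({u} \<union> {y})))"
    using finite_B finite_R by (simp add: sum_Pow_psi)
  also have "\<dots> = (\<Sum>y\<in>R. \<Sum>u\<in>B. complex_of_real (lam_pow lam y * lam_pow lam u) * v (insert u {y}))"
    by (subst sum.swap) (simp add: sum_distrib_left algebra_simps insert_commute)
  finally have e: "(\<Sum>T\<in>Pow A. complex_of_real (psi lam B (T \<inter> B) * psi lam R (T \<inter> R)) * v T)
      = (\<Sum>y\<in>R. \<Sum>u\<in>B. complex_of_real (lam_pow lam y * lam_pow lam u) * v (insert u {y}))" .
  show ?thesis unfolding beta_def qvec_def e[symmetric]
    by (simp add: sum_divide_distrib algebra_simps)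
qed

lemma hvec_kvec_orthogonal: "(\<Sum>S\<in>Pow A. hvec S * kvec S) = 0"
proof (rule sum.neutral, rule ballI)
  fix S assume S: "S \<in> Pow A"
  show "hvec S * kvec S = 0"
  proof (cases "kvec S = 0")
    case False
    then have "card (S \<inter> a) = 1" "card (S \<inter> D) = 1"
      unfolding kvec_def by (metis mult_eq_0_iff psi_card_neq_1)+
    moreover have "card S = card (S \<inter> (A - D)) + card (S \<inter> D)"
      using S finite_A finite_subset by (intro card_Int_Diff_add) auto
    ultimately have "card S \<noteq> 1" unfolding A_Diff_D by simp
    then show ?thesis unfolding hvec_def by (simp add: psi_card_neq_1)
  qed simp
qed

lemma gvec_qvec_orthogonal: "(\<Sum>S\<in>Pow A. gvec S * qvec S) = 0"
proof (rule sum.neutral, rule ballI)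
  fix S assume S: "S \<in> Pow A"
  show "gvec S * qvec S = 0"
  proof (cases "qvec S = 0")
    case False
    then have "card (S \<inter> B) = 1" "card (S \<inter> R) = 1"
      unfolding qvec_def by (metis divide_eq_0_iff mult_eq_0_iff psi_card_neq_1)+
    moreover have "card S = card (S \<inter> (A - R)) + card (S \<inter> R)"
      using S finite_A finite_subset by (intro card_Int_Diff_add) auto
    ultimately have "card S \<noteq> 1" unfolding A_Diff_R by simp
    then show ?thesis unfolding gvec_def by (simp add: psi_card_neq_1)
  qed simp
qed

lemma sum_gvec_sq: "(\<Sum>S\<in>Pow A. (gvec S)\<^sup>2) = Cw lam R / (Cw lam B * Cw lam A)"
proof -
  have pt: "\<And>S. (gvec S)\<^sup>2 = psi lam B S * psi lam B S / (Cw lam B)\<^sup>2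
      - 2 * (psi lam B S * psi lam A S) / (Cw lam B * Cw lam A) + psi lam A S * psi lam A S / (Cw lam A)\<^sup>2"
    unfolding gvec_def using Cw_B_pos Cw_A_pos by (simp add: power2_eq_square field_simps)
  have "(\<Sum>S\<in>Pow A. psi lam B S * psi lam B S) = Cw lam B"
    "(\<Sum>S\<in>Pow A. psi lam B S * psi lam A S) = Cw lam B"
    "(\<Sum>S\<in>Pow A. psi lam A S * psi lam A S) = Cw lam A"
    using sum_Pow_psi_psi[OF finite_A] B_subset_A by (simp_all add: Int_absorb2)
  then have "(\<Sum>S\<in>Pow A. (gvec S)\<^sup>2)
      = Cw lam B / (Cw lam B)\<^sup>2 - 2 * Cw lam B / (Cw lam B * Cw lam A) + Cw lam A / (Cw lam A)\<^sup>2"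
    unfolding pt by (simp add: sum_subtractf sum.distrib sum_divide_distrib[symmetric]
        sum_distrib_left[symmetric])
  also have "\<dots> = 1 / Cw lam B - 1 / Cw lam A"
    using Cw_B_pos Cw_A_pos by (simp add: field_simps power2_eq_square)
  also have "\<dots> = Cw lam R / (Cw lam B * Cw lam A)"
    using Cw_B_pos Cw_A_pos Cw_A_eq_B_R by (simp add: field_simps)
  finally show ?thesis .
qed

lemma sum_hvec_sq: "(\<Sum>S\<in>Pow A. (hvec S)\<^sup>2) = Cw lam a * Cw lam A / Cw lam D"
proof -
  define r where "r = Cw lam a / Cw lam D"
  have pt: "\<And>S. (hvec S)\<^sup>2 = psi lam a S * psi lam a S - 2 * r * (psi lam a S * psi lam D S)
      + r\<^sup>2 * (psi lam D S * psi lam D S)"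
    unfolding hvec_def r_def using Cw_D_pos by (simp add: power2_eq_square field_simps)
  have "a \<subseteq> A" "a \<inter> D = {}" using a_B B_A by blast+
  then have "(\<Sum>S\<in>Pow A. psi lam a S * psi lam a S) = Cw lam a"
    "(\<Sum>S\<in>Pow A. psi lam a S * psi lam D S) = 0"
    "(\<Sum>S\<in>Pow A. psi lam D S * psi lam D S) = Cw lam D"
    using sum_Pow_psi_psi[OF finite_A] by simp_all
  then have "(\<Sum>S\<in>Pow A. (hvec S)\<^sup>2) = Cw lam a + r\<^sup>2 * Cw lam D"
    unfolding pt by (simp add: sum_subtractf sum.distrib sum_distrib_left[symmetric])
  also have "\<dots> = Cw lam a * Cw lam A / Cw lam D"
    using Cw_D_pos Cw_A_eq_a_D unfolding r_def by (simp add: field_simps power2_eq_square)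
  finally show ?thesis .
qed

lemma sum_kvec_sq: "(\<Sum>S\<in>Pow A. (kvec S)\<^sup>2) = Cw lam a * Cw lam D"
proof -
  have "(\<Sum>S\<in>Pow A. (kvec S)\<^sup>2)
      = (\<Sum>S\<in>Pow A. (psi lam a (S \<inter> (A - D)))\<^sup>2 * (psi lam D (S \<inter> D))\<^sup>2)"
    unfolding kvec_def A_Diff_D by (simp add: power_mult_distrib)
  also have "\<dots> = (\<Sum>U\<in>Pow (A - D). (psi lam a U)\<^sup>2) * (\<Sum>V\<in>Pow D. (psi lam D V)\<^sup>2)"
    by (rule sum_Pow_product[OF finite_A]) simp
  also have "\<dots> = Cw lam a * Cw lam D"
    unfolding A_Diff_D using sum_Pow_psi_sq[OF finite_a] sum_Pow_psi_sq[OF finite_D] by simp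
  finally show ?thesis .
qed

lemma sum_qvec_sq: "(\<Sum>S\<in>Pow A. (qvec S)\<^sup>2) = Cw lam B * Cw lam R / (Cw lam D * Cw lam B)\<^sup>2"
proof -
  have "(\<Sum>S\<in>Pow A. (qvec S)\<^sup>2)
      = (\<Sum>S\<in>Pow A. (psi lam B (S \<inter> (A - R)))\<^sup>2 * (psi lam R (S \<inter> R))\<^sup>2) / (Cw lam D * Cw lam B)\<^sup>2"
    unfolding qvec_def A_Diff_R by (simp add: power_mult_distrib power_divide sum_divide_distrib)
  also have "(\<Sum>S\<in>Pow A. (psi lam B (S \<inter> (A - R)))\<^sup>2 * (psi lam R (S \<inter> R))\<^sup>2)
      = (\<Sum>U\<in>Pow (A - R). (psi lam B U)\<^sup>2) * (\<Sum>V\<in>Pow R. (psi lam R V)\<^sup>2)"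
    by (rule sum_Pow_product[OF finite_A]) simp
  also have "\<dots> = Cw lam B * Cw lam R"
    unfolding A_Diff_R using sum_Pow_psi_sq[OF finite_B] sum_Pow_psi_sq[OF finite_R] by simp
  finally show ?thesis .
qed

lemma mv_GD_E:
  assumes S: "S \<in> Pow A"
  shows "mv A (mmul A (Gext lam D A) (\<lambda>S T. Gext lam B A S T - Gext lam A A S T)) v S
       = (\<Sum>T\<in>Pow A. complex_of_real (gvec T) * v T) * complex_of_real (hvec S)
         + (\<Sum>T\<in>Pow A. complex_of_real (qvec T) * v T) * complex_of_real (kvec S)"
proof -
  let ?E = "\<lambda>S T. Gext lam B A S T - Gext lam A A S T"
  have E: "mv A ?E v T = E_apply v T" if T: "T \<subseteq> A" for T
  proof -
    have "mv A ?E v T = mv A (Gext lam B A) v T - mv A (Gext lam A A) v T"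
      unfolding mv_def by (simp add: left_diff_distrib sum_subtractf)
    then show ?thesis
      unfolding E_apply_def using mv_Gext[OF finite_A B_subset_A conn_B T]
        mv_Gext[OF finite_A subset_refl conn_A T] by simp
  qed
  have "mv A (mmul A (Gext lam D A) ?E) v S = mv A (Gext lam D A) (mv A ?E v) S"
    by (rule mv_mmul[OF finite_A])
  also have "\<dots> = Gapply lam D (mv A ?E v) S"
    using S by (intro mv_Gext[OF finite_A _ conn_D]) auto
  also have "\<dots> = Gapply lam D (E_apply v) S"
    using S by (intro Gapply_cong[OF E]) auto
  also have "\<dots> = alpha v * complex_of_real (hvec S) + beta v * complex_of_real (kvec S)"
    using S by (intro GD_E_apply) auto
  finally show ?thesis unfolding alpha_eq_sum beta_eq_sum .
qed

lemma opnorm_GD_E: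
  "opnorm A (mmul A (Gext lam D A) (\<lambda>S T. Gext lam B A S T - Gext lam A A S T))
   = sqrt (Cw lam a * Cw lam R / (Cw lam D * Cw lam B))"
proof (rule opnorm_rank2[OF mv_GD_E hvec_kvec_orthogonal gvec_qvec_orthogonal])
  show "(\<Sum>S\<in>Pow A. (gvec S)\<^sup>2) > 0" "(\<Sum>S\<in>Pow A. (qvec S)\<^sup>2) > 0"
    unfolding sum_gvec_sq sum_qvec_sq using Cw_A_pos Cw_B_pos Cw_D_pos Cw_R_pos by simp_all
  show "(\<Sum>S\<in>Pow A. (hvec S)\<^sup>2) * (\<Sum>S\<in>Pow A. (gvec S)\<^sup>2) = Cw lam a * Cw lam R / (Cw lam D * Cw lam B)"
    unfolding sum_hvec_sq sum_gvec_sq using Cw_A_pos by (simp add: field_simps)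
  show "(\<Sum>S\<in>Pow A. (kvec S)\<^sup>2) * (\<Sum>S\<in>Pow A. (qvec S)\<^sup>2) = Cw lam a * Cw lam R / (Cw lam D * Cw lam B)"
    unfolding sum_kvec_sq sum_qvec_sq using Cw_B_pos Cw_D_pos by (simp add: field_simps power2_eq_square)
qed

end

lemma chain_subset_mono:
  assumes incr: "\<forall>k\<ge>1. Lam k \<subset> Lam (Suc k)" and "1 \<le> i" "i \<le> j"
  shows "Lam i \<subseteq> Lam j"
  using \<open>i \<le> j\<close>
proof (induction j rule: dec_induct)
  case (step m)
  then have "Lam m \<subset> Lam (Suc m)" using incr \<open>1 \<le> i\<close> by simp
  then show ?case using step.IH by blast
qed simp

theorem lemma3p3:
  fixes lam :: "real ^ 'd::finite"
    and Lam :: "nat \<Rightarrow> 'd site set"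
    and l n :: nat
  assumes lam_pos: "\<forall>j. lam $ j > 0"
    and l2: "l \<ge> 2"
    and fin: "\<forall>k\<ge>1. finite (Lam k)"
    and incr: "\<forall>k\<ge>1. Lam k \<subset> Lam (Suc k)"
    and conn: "\<forall>k\<ge>1. nn_connected (Lam k)"
    and conn_diff: "\<forall>k>l. nn_connected (Lam k - Lam (k - l))"
    and n: "n + 1 - l \<ge> 1"
  shows "(opnorm (Lam (n + 1))
            (mmul (Lam (n + 1))
               (Gext lam (Lam (n + 1) - Lam (n + 1 - l)) (Lam (n + 1)))
               (\<lambda>S T. Gext lam (Lam n) (Lam (n + 1)) S T
                      - Gext lam (Lam (n + 1)) (Lam (n + 1)) S T)))\<^sup>2
         = Cw lam (Lam (n + 1 - l)) * Cw lam (Lam (n + 1) - Lam n)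
           / (Cw lam (Lam n) * Cw lam (Lam (n + 1) - Lam (n + 1 - l)))"
proof -
  have "l \<le> n" "2 \<le> n" using n l2 by auto
  have "Lam (n + 1 - l) \<subseteq> Lam n" using chain_subset_mono[OF incr n, of n] \<open>2 \<le> l\<close> by simp
  moreover have "Lam 1 \<subset> Lam 2" "Lam 2 \<subseteq> Lam n"
    using incr chain_subset_mono[OF incr, of 2 n] \<open>2 \<le> n\<close> by (auto simp: numeral_2_eq_2)
  then have "Lam n \<noteq> {}" by blast
  ultimately interpret nested_regions lam "Lam (n + 1)" "Lam n" "Lam (n + 1 - l)"
    using lam_pos fin incr conn conn_diff \<open>l \<le> n\<close> \<open>2 \<le> n\<close> by unfold_locales auto
  have "Cw lam (Lam (n + 1 - l)) * Cw lam (Lam (n + 1) - Lam n)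
      / (Cw lam (Lam n) * Cw lam (Lam (n + 1) - Lam (n + 1 - l))) \<ge> 0"
    using Cw_nonneg Cw_D_pos Cw_B_pos by simp
  then show ?thesis unfolding opnorm_GD_E by (simp add: mult.commute)
qed

end
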